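(* Let $\mathbf{g}=-dt^2+a^2(t)\sigma_{ij}(x)dx^idx^j$ be an FLRW metric on $\mathbb{R}^+\times\mathbb{R}^n$, where $\sigma$ is a Riemannian metric on $\mathbb{R}^n$ and $a$ satisfies the standing assumptions in the context. Then there exists a constant $C_1>0$ such that for every $T>t_0$ and every (sufficiently regular) $\phi:[t_0,T)\times\mathbb{R}^n\to\mathbb{R}$, $$\sup_{t_0\le t<T}E^{1/2}[\phi](t)\le C_1\Big(E^{1/2}[\phi](t_0)+\int_{t_0}^T a(t)\,\|\square_{\mathbf{g}}\phi(t,\cdot)\|_{L^2_\sigma}\,dt\Big),$$ where $$E[\phi](t)=\frac12\int_{\mathbb{R}^n}\Big[a^2(\partial_t\phi)^2+\sigma^{ij}\partial_i\phi\,\partial_j\phi\Big](t,x)\,|\sigma|^{1/2}\,dx .$$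
   Context: Standing assumptions: $t_0>0$ is fixed, $a$ is smooth with $a(t)>0$ and $\dot a(t)>0$ for $t\ge t_0$, and $\int_{t_0}^\infty a(s)^{-1}ds<\infty$. $\sigma^{ij}$ are the components of the inverse of $\sigma_{ij}$ and $|\sigma|=\det(\sigma_{ij})$. $\|f\|_{L^2_\sigma}=\big(\int_{\mathbb{R}^n}|f(x)|^2|\sigma|^{1/2}dx\big)^{1/2}$. $\square_{\mathbf{g}}\phi=\frac{1}{\sqrt{|\mathbf{g}|}}\partial_\alpha(\mathbf{g}^{\alpha\beta}\sqrt{|\mathbf{g}|}\partial_\beta\phi)$ with $|\mathbf{g}|=-\det(\mathbf{g}_{\alpha\beta})$, i.e. $\square_{\mathbf{g}}\phi=-\partial_t^2\phi-n\frac{\dot a}{a}\partial_t\phi+a^{-2}\Delta_\sigma\phi$. *)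

theory Defs
  imports "HOL-Analysis.Analysis"
begin

definition pdir :: "'a::euclidean_space \<Rightarrow> ('a \<Rightarrow> real) \<Rightarrow> 'a \<Rightarrow> real" where
  "pdir b f x = deriv (\<lambda>h. f (x + h *\<^sub>R b)) 0"

primrec iter_pd :: "'a::euclidean_space list \<Rightarrow> ('a \<Rightarrow> real) \<Rightarrow> 'a \<Rightarrow> real" where
  "iter_pd [] f = f"
| "iter_pd (b # bs) f = pdir b (iter_pd bs f)"

definition smooth_on :: "'a::euclidean_space set \<Rightarrow> ('a \<Rightarrow> real) \<Rightarrow> bool" where
  "smooth_on S f \<longleftrightarrow>
     (\<forall>bs. set bs \<subseteq> Basis \<longrightarrow>
        continuous_on S (iter_pd bs f) \<and>
        (\<forall>b\<in>Basis. \<forall>x\<in>S. (\<lambda>h. iter_pd bs f (x + h *\<^sub>R b)) differentiable (at 0)))"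

definition riemannian_metric :: "(real^'n \<Rightarrow> real^'n^'n) \<Rightarrow> bool" where
  "riemannian_metric \<sigma> \<longleftrightarrow>
     (\<forall>x. transpose (\<sigma> x) = \<sigma> x \<and> (\<forall>v. v \<noteq> 0 \<longrightarrow> v \<bullet> (\<sigma> x *v v) > 0)) \<and>
     (\<forall>i j. smooth_on UNIV (\<lambda>x. \<sigma> x $ i $ j))"

definition sig_inv :: "(real^'n \<Rightarrow> real^'n^'n) \<Rightarrow> real^'n \<Rightarrow> 'n \<Rightarrow> 'n \<Rightarrow> real" where
  "sig_inv \<sigma> x i j = matrix_inv (\<sigma> x) $ i $ j"

definition sig_det :: "(real^'n \<Rightarrow> real^'n^'n) \<Rightarrow> real^'n \<Rightarrow> real" where
  "sig_det \<sigma> x = det (\<sigma> x)"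

definition dt :: "(real \<Rightarrow> real^'n \<Rightarrow> real) \<Rightarrow> real \<Rightarrow> real^'n \<Rightarrow> real" where
  "dt \<phi> t x = deriv (\<lambda>s. \<phi> s x) t"

definition dxi :: "'n \<Rightarrow> (real^'n \<Rightarrow> real) \<Rightarrow> real^'n \<Rightarrow> real" where
  "dxi i f x = deriv (\<lambda>h. f (x + h *\<^sub>R axis i 1)) 0"

definition lap_sigma :: "(real^'n \<Rightarrow> real^'n^'n) \<Rightarrow> (real^'n \<Rightarrow> real) \<Rightarrow> real^'n \<Rightarrow> real" where
  "lap_sigma \<sigma> f x =
     (1 / sqrt (sig_det \<sigma> x)) *
     (\<Sum>i\<in>UNIV. dxi i (\<lambda>y. \<Sum>j\<in>UNIV. sig_inv \<sigma> y i j * sqrt (sig_det \<sigma> y) * dxi j f y) x)"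

text \<open>Wave operator of g = -dt^2 + a(t)^2 sigma_ij dx^i dx^j:
  -d_t^2 phi - n (a'/a) d_t phi + a^{-2} Delta_sigma phi\<close>
definition box_g :: "(real \<Rightarrow> real) \<Rightarrow> (real^'n \<Rightarrow> real^'n^'n) \<Rightarrow> (real \<Rightarrow> real^'n \<Rightarrow> real)
    \<Rightarrow> real \<Rightarrow> real^'n \<Rightarrow> real" where
  "box_g a \<sigma> \<phi> t x =
     - dt (dt \<phi>) t x - real CARD('n) * (deriv a t / a t) * dt \<phi> t x
     + (1 / (a t)\<^sup>2) * lap_sigma \<sigma> (\<phi> t) x"

definition energy :: "(real \<Rightarrow> real) \<Rightarrow> (real^'n \<Rightarrow> real^'n^'n) \<Rightarrow> (real \<Rightarrow> real^'n \<Rightarrow> real)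
    \<Rightarrow> real \<Rightarrow> real" where
  "energy a \<sigma> \<phi> t =
     1/2 * (\<integral>x. ((a t)\<^sup>2 * (dt \<phi> t x)\<^sup>2
                 + (\<Sum>i\<in>UNIV. \<Sum>j\<in>UNIV. sig_inv \<sigma> x i j * dxi i (\<phi> t) x * dxi j (\<phi> t) x))
                * sqrt (sig_det \<sigma> x) \<partial>lborel)"

definition L2_sigma :: "(real^'n \<Rightarrow> real^'n^'n) \<Rightarrow> (real^'n \<Rightarrow> real) \<Rightarrow> real" where
  "L2_sigma \<sigma> f = sqrt (\<integral>x. (f x)\<^sup>2 * sqrt (sig_det \<sigma> x) \<partial>lborel)"

end

theory Submission
  imports Defs
begin

text \<open>Multiplying the wave equation by a^2 (d_t phi) sqrt |sigma| gives the energy identity: the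
  time derivative of the energy density is (1 - n) a a' (d_t phi)^2 sqrt |sigma|, which is
  nonpositive because a' > 0, minus a^2 (d_t phi) (box_g phi) sqrt |sigma|, plus a spatial
  divergence, which integrates to zero since phi has compact support. By Cauchy-Schwarz,
  E' <= a sqrt (2 E) ||box_g phi||. If M is the supremum of sqrt E on [t0, t], integrating gives
  M^2 <= E t0 + sqrt 2 M int a ||box_g phi||, hence M <= sqrt (E t0) + sqrt 2 int a ||box_g phi||,
  and C1 = 2 works.\<close>

section \<open>Directional derivatives\<close>

lemma DERIV_along_line:
  fixes f :: "'a::real_normed_vector \<Rightarrow> real"
  assumes "\<And>q. q \<in> U \<Longrightarrow> ((\<lambda>h. f (q + h *\<^sub>R b)) has_real_derivative f' q) (at 0)"
    and "p + s *\<^sub>R b \<in> U"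
  shows "((\<lambda>s. f (p + s *\<^sub>R b)) has_real_derivative f' (p + s *\<^sub>R b)) (at s)"
proof -
  have "((\<lambda>h. f (p + s *\<^sub>R b + h *\<^sub>R b)) has_real_derivative f' (p + s *\<^sub>R b)) (at 0)"
    using assms by blast
  then have "((\<lambda>h. f (p + (h + s) *\<^sub>R b)) has_real_derivative f' (p + s *\<^sub>R b)) (at 0)"
    by (simp add: algebra_simps scaleR_add_left)
  then show ?thesis
    using DERIV_shift[of "\<lambda>s. f (p + s *\<^sub>R b)" _ 0 s] by simp
qed

lemma DERIV_along_line_outside_closed:
  fixes f :: "'a::real_normed_vector \<Rightarrow> real"
  assumes "closed K" "x \<notin> K" "\<And>y. y \<notin> K \<Longrightarrow> f y = 0"
  shows "((\<lambda>h. f (x + h *\<^sub>R b)) has_real_derivative 0) (at 0)"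
proof -
  let ?S = "(\<lambda>h::real. x + h *\<^sub>R b) -` (- K)"
  have "open ?S"
    using assms(1) by (intro open_vimage continuous_intros) auto
  moreover have "0 \<in> ?S"
    using assms by simp
  ultimately show ?thesis
    by (rule has_field_derivative_transform_within_open[OF DERIV_const[of 0]]) (use assms in auto)
qed

lemma DERIV_eq_0_if_vanishing_right:
  fixes g :: "real \<Rightarrow> real"
  assumes "(g has_real_derivative D) (at s)" "s < T" "\<And>u. u \<in> {s..<T} \<Longrightarrow> g u = 0"
  shows "D = 0"
proof -
  have "(g has_real_derivative D) (at s within {s..<T})"
    using assms(1) by (rule has_field_derivative_at_within)
  then have "((\<lambda>_. 0) has_real_derivative D) (at s within {s..<T})"
    by (rule has_field_derivative_transform_within[where d=1]) (use assms in auto)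
  moreover have "at s within {s..<T} \<noteq> bot"
  proof -
    have "{s..<T} - {s} = {s<..<T}"
      by auto
    then show ?thesis
      using assms(2) by (simp add: at_within_eq_bot_iff)
  qed
  ultimately show ?thesis
    using has_field_derivative_unique DERIV_const by blast
qed

lemma MVT_along_line:
  fixes f :: "'a::real_normed_vector \<Rightarrow> real"
  assumes "0 < h" and seg: "\<And>s. 0 \<le> s \<Longrightarrow> s \<le> h \<Longrightarrow> p + s *\<^sub>R b \<in> U"
    and f': "\<And>q. q \<in> U \<Longrightarrow> ((\<lambda>h. f (q + h *\<^sub>R b)) has_real_derivative f' q) (at 0)"
  shows "\<exists>\<xi>>0. \<xi> < h \<and> f (p + h *\<^sub>R b) - f p = h * f' (p + \<xi> *\<^sub>R b)"
  using MVT2[OF \<open>0 < h\<close>, of "\<lambda>s. f (p + s *\<^sub>R b)" "\<lambda>s. f' (p + s *\<^sub>R b)"]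
    DERIV_along_line[OF f' seg] by simp

lemma second_difference_mean_value:
  fixes f :: "'a::real_normed_vector \<Rightarrow> real"
  assumes U: "ball p r \<subseteq> U" and h: "0 < h" "h * (norm b + norm c) < r"
    and fb: "\<And>q. q \<in> U \<Longrightarrow> ((\<lambda>h. f (q + h *\<^sub>R b)) has_real_derivative fb q) (at 0)"
    and fbc: "\<And>q. q \<in> U \<Longrightarrow> ((\<lambda>h. fb (q + h *\<^sub>R c)) has_real_derivative fbc q) (at 0)"
  shows "\<exists>q. dist q p \<le> h * (norm b + norm c) \<and>
    f (p + h *\<^sub>R b + h *\<^sub>R c) - f (p + h *\<^sub>R b) - f (p + h *\<^sub>R c) + f p = h\<^sup>2 * fbc q"
proof -
  have near: "dist (p + s *\<^sub>R b + y *\<^sub>R c) p \<le> h * (norm b + norm c)"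
    if "0 \<le> s" "s \<le> h" "0 \<le> y" "y \<le> h" for s y
  proof -
    have "dist (p + s *\<^sub>R b + y *\<^sub>R c) p \<le> s * norm b + y * norm c"
      using that norm_triangle_ineq[of "s *\<^sub>R b" "y *\<^sub>R c"] by (simp add: dist_norm add.assoc)
    also have "\<dots> \<le> h * (norm b + norm c)"
      using that by (simp add: distrib_left add_mono mult_right_mono)
    finally show ?thesis .
  qed
  have inU: "p + s *\<^sub>R b + y *\<^sub>R c \<in> U" if "0 \<le> s" "s \<le> h" "0 \<le> y" "y \<le> h" for s y
    using near[OF that] h U by (auto simp: dist_commute)
  have seg: "p + s *\<^sub>R b \<in> {q \<in> U. q + h *\<^sub>R c \<in> U}" if "0 \<le> s" "s \<le> h" for s
    using inU[of s 0] inU[of s h] that h by simp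
  have "((\<lambda>k. f (q + k *\<^sub>R b + h *\<^sub>R c) - f (q + k *\<^sub>R b)) has_real_derivative
      fb (q + h *\<^sub>R c) - fb q) (at 0)" if "q \<in> {q \<in> U. q + h *\<^sub>R c \<in> U}" for q
    using DERIV_diff[OF fb[of "q + h *\<^sub>R c"] fb[of q]] that by (simp add: algebra_simps)
  then obtain \<xi> where \<xi>: "0 < \<xi>" "\<xi> < h" and mvt1:
    "f (p + h *\<^sub>R b + h *\<^sub>R c) - f (p + h *\<^sub>R b) - (f (p + h *\<^sub>R c) - f p)
      = h * (fb (p + \<xi> *\<^sub>R b + h *\<^sub>R c) - fb (p + \<xi> *\<^sub>R b))"
    using MVT_along_line[where f="\<lambda>q. f (q + h *\<^sub>R c) - f q" and f'="\<lambda>q. fb (q + h *\<^sub>R c) - fb q",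
        OF h(1) seg]
    by (auto simp: algebra_simps)
  obtain \<eta> where \<eta>: "0 < \<eta>" "\<eta> < h"
    and mvt2: "fb (p + \<xi> *\<^sub>R b + h *\<^sub>R c) - fb (p + \<xi> *\<^sub>R b) = h * fbc (p + \<xi> *\<^sub>R b + \<eta> *\<^sub>R c)"
    using MVT_along_line[OF h(1), of "p + \<xi> *\<^sub>R b" c U fb fbc] inU[of \<xi>] \<xi> fbc by auto
  show ?thesis
    using near[of \<xi> \<eta>] \<xi> \<eta> mvt1 mvt2
    by (intro exI[of _ "p + \<xi> *\<^sub>R b + \<eta> *\<^sub>R c"]) (simp add: power2_eq_square algebra_simps)
qed

lemma mixed_dir_derivs_commute:
  fixes f :: "'a::real_normed_vector \<Rightarrow> real"
  assumes U: "open U" "p \<in> U"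
    and fb: "\<And>q. q \<in> U \<Longrightarrow> ((\<lambda>h. f (q + h *\<^sub>R b)) has_real_derivative fb q) (at 0)"
    and fc: "\<And>q. q \<in> U \<Longrightarrow> ((\<lambda>h. f (q + h *\<^sub>R c)) has_real_derivative fc q) (at 0)"
    and fbc: "\<And>q. q \<in> U \<Longrightarrow> ((\<lambda>h. fb (q + h *\<^sub>R c)) has_real_derivative fbc q) (at 0)"
    and fcb: "\<And>q. q \<in> U \<Longrightarrow> ((\<lambda>h. fc (q + h *\<^sub>R b)) has_real_derivative fcb q) (at 0)"
    and cont: "isCont fbc p" "isCont fcb p"
  shows "fbc p = fcb p"
proof (rule ccontr)
  assume ne: "fbc p \<noteq> fcb p"
  define e where "e = \<bar>fbc p - fcb p\<bar> / 2"
  have e: "e > 0"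
    using ne by (simp add: e_def)
  obtain r where r: "r > 0" "ball p r \<subseteq> U"
    using U openE by blast
  obtain d1 where d1: "d1 > 0" "\<And>q. dist q p < d1 \<Longrightarrow> \<bar>fbc q - fbc p\<bar> < e"
    using cont(1) e unfolding continuous_at_eps_delta dist_real_def by blast
  obtain d2 where d2: "d2 > 0" "\<And>q. dist q p < d2 \<Longrightarrow> \<bar>fcb q - fcb p\<bar> < e"
    using cont(2) e unfolding continuous_at_eps_delta dist_real_def by blast
  define m where "m = min r (min d1 d2)"
  define h where "h = m / (norm b + norm c + 1)"
  have "m > 0" "norm b + norm c + 1 > 0"
    using r d1 d2 by (auto simp: m_def add_nonneg_pos)
  then have h: "h > 0" "h * (norm b + norm c) < m"
    by (simp_all add: h_def divide_less_eq algebra_simps)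
  obtain q1 where q1: "dist q1 p \<le> h * (norm b + norm c)"
    "f (p + h *\<^sub>R b + h *\<^sub>R c) - f (p + h *\<^sub>R b) - f (p + h *\<^sub>R c) + f p = h\<^sup>2 * fbc q1"
    using second_difference_mean_value[OF r(2) h(1) _ fb fbc] h by (force simp: m_def)
  obtain q2 where q2: "dist q2 p \<le> h * (norm b + norm c)"
    "f (p + h *\<^sub>R c + h *\<^sub>R b) - f (p + h *\<^sub>R c) - f (p + h *\<^sub>R b) + f p = h\<^sup>2 * fcb q2"
    using second_difference_mean_value[OF r(2) h(1) _ fc fcb] h by (force simp: m_def add.commute)
  have "fbc q1 = fcb q2"
    using q1(2) q2(2) h(1) by (simp add: algebra_simps)
  moreover have "\<bar>fbc q1 - fbc p\<bar> < e" "\<bar>fcb q2 - fcb p\<bar> < e"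
    using d1(2)[of q1] d2(2)[of q2] q1(1) q2(1) h(2) by (auto simp: m_def)
  ultimately have "\<bar>fbc p - fcb p\<bar> < 2 * e"
    by linarith
  then show False
    by (simp add: e_def)
qed

definition C1_along :: "'a::euclidean_space \<Rightarrow> ('a \<Rightarrow> real) \<Rightarrow> bool" where
  "C1_along b f \<longleftrightarrow> continuous_on UNIV f \<and> continuous_on UNIV (pdir b f) \<and>
     (\<forall>x. ((\<lambda>h. f (x + h *\<^sub>R b)) has_real_derivative pdir b f x) (at 0))"

lemma pdir_eqI:
  "((\<lambda>h. f (x + h *\<^sub>R b)) has_real_derivative D) (at 0) \<Longrightarrow> pdir b f x = D"
  unfolding pdir_def by (rule DERIV_imp_deriv)

lemma dxi_eq_pdir: "dxi i f = pdir (axis i 1) f"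
  by (simp add: dxi_def pdir_def fun_eq_iff)

lemma C1_alongI:
  assumes "continuous_on UNIV f" "continuous_on UNIV f'"
    and "\<And>x. ((\<lambda>h. f (x + h *\<^sub>R b)) has_real_derivative f' x) (at 0)"
  shows "C1_along b f" and "pdir b f = f'"
proof -
  show "pdir b f = f'"
    using assms(3) by (auto intro: pdir_eqI)
  then show "C1_along b f"
    using assms by (simp add: C1_along_def)
qed

lemma C1_alongD:
  assumes "C1_along b f"
  shows "continuous_on UNIV f" "continuous_on UNIV (pdir b f)"
    and "((\<lambda>h. f (x + h *\<^sub>R b)) has_real_derivative pdir b f x) (at 0)"
  using assms by (auto simp: C1_along_def)

lemma C1_along_const: "C1_along b (\<lambda>_. c)"
  by (rule C1_alongI[where f'="\<lambda>_. 0"]) auto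

lemma
  assumes f: "C1_along b f" and g: "C1_along b g"
  shows C1_along_add: "C1_along b (\<lambda>x. f x + g x)"
    and C1_along_mult: "C1_along b (\<lambda>x. f x * g x)"
    and pdir_mult: "pdir b (\<lambda>x. f x * g x) = (\<lambda>x. pdir b f x * g x + f x * pdir b g x)"
proof -
  note fD = C1_alongD[OF f] and gD = C1_alongD[OF g]
  show "C1_along b (\<lambda>x. f x + g x)"
    by (rule C1_alongI[where f'="\<lambda>x. pdir b f x + pdir b g x"])
      (use fD gD in \<open>auto intro!: continuous_intros DERIV_add\<close>)
  have deriv: "((\<lambda>h. f (x + h *\<^sub>R b) * g (x + h *\<^sub>R b)) has_real_derivative
      pdir b f x * g x + f x * pdir b g x) (at 0)" for x
    using DERIV_mult[OF fD(3) gD(3), of x x] by (simp add: mult.commute)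
  have cont: "continuous_on UNIV (\<lambda>x. f x * g x)"
    "continuous_on UNIV (\<lambda>x. pdir b f x * g x + f x * pdir b g x)"
    using fD gD by (auto intro!: continuous_intros)
  show "C1_along b (\<lambda>x. f x * g x)"
    and "pdir b (\<lambda>x. f x * g x) = (\<lambda>x. pdir b f x * g x + f x * pdir b g x)"
    using C1_alongI[OF cont deriv] by auto
qed

lemma C1_along_sum:
  "finite I \<Longrightarrow> (\<And>i. i \<in> I \<Longrightarrow> C1_along b (f i)) \<Longrightarrow> C1_along b (\<lambda>x. \<Sum>i\<in>I. f i x)"
  by (induction I rule: finite_induct) (auto intro: C1_along_const C1_along_add)

lemma C1_along_prod:
  "finite I \<Longrightarrow> (\<And>i. i \<in> I \<Longrightarrow> C1_along b (f i)) \<Longrightarrow> C1_along b (\<lambda>x. \<Prod>i\<in>I. f i x)"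
  by (induction I rule: finite_induct) (auto intro: C1_along_const C1_along_mult)

lemma C1_along_divide:
  assumes f: "C1_along b f" and g: "C1_along b g" and nz: "\<And>x. g x \<noteq> 0"
  shows "C1_along b (\<lambda>x. f x / g x)"
proof -
  note fD = C1_alongD[OF f] and gD = C1_alongD[OF g]
  have "((\<lambda>h. f (x + h *\<^sub>R b) / g (x + h *\<^sub>R b)) has_real_derivative
      (pdir b f x * g x - f x * pdir b g x) / (g x * g x)) (at 0)" for x
    using DERIV_divide[OF fD(3) gD(3), of x x] nz by simp
  then show ?thesis
    by (rule C1_alongI(1)[rotated 2]) (use fD gD nz in \<open>auto intro!: continuous_intros\<close>)
qed

lemma C1_along_sqrt:
  assumes f: "C1_along b f" and pos: "\<And>x. f x > 0"
  shows "C1_along b (\<lambda>x. sqrt (f x))"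
proof -
  note fD = C1_alongD[OF f]
  have "((\<lambda>h. sqrt (f (x + h *\<^sub>R b))) has_real_derivative
      inverse (sqrt (f x)) / 2 * pdir b f x) (at 0)" for x
    using DERIV_chain2[OF DERIV_real_sqrt fD(3), of x] pos[of x] by simp
  then show ?thesis
    by (rule C1_alongI(1)[rotated 2])
      (use fD pos in \<open>auto intro!: continuous_intros simp: less_imp_neq[symmetric]\<close>)
qed

lemma C1_along_det:
  fixes M :: "'a::euclidean_space \<Rightarrow> real^'n^'n"
  assumes "\<And>i j. C1_along b (\<lambda>x. M x $ i $ j)"
  shows "C1_along b (\<lambda>x. det (M x))"
  unfolding det_def
  by (intro C1_along_sum C1_along_prod C1_along_mult C1_along_const assms) auto

lemma pdir_eq_0_outside_closed:
  assumes "C1_along b f" "closed K" "x \<notin> K" "\<And>y. y \<notin> K \<Longrightarrow> f y = 0"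
  shows "pdir b f x = 0"
  using DERIV_unique[OF C1_alongD(3)[OF assms(1)] DERIV_along_line_outside_closed[OF assms(2-4)]] .

lemma smooth_on_has_pdir:
  assumes "smooth_on S f" "set bs \<subseteq> Basis" "b \<in> Basis" "x \<in> S"
  shows "((\<lambda>h. iter_pd bs f (x + h *\<^sub>R b)) has_real_derivative iter_pd (b # bs) f x) (at 0)"
proof -
  have "(\<lambda>h. iter_pd bs f (x + h *\<^sub>R b)) differentiable (at 0)"
    using assms unfolding smooth_on_def by blast
  then show ?thesis
    by (simp add: pdir_def DERIV_deriv_iff_real_differentiable)
qed

lemma smooth_on_continuous_iter_pd:
  "smooth_on S f \<Longrightarrow> set bs \<subseteq> Basis \<Longrightarrow> continuous_on S (iter_pd bs f)"
  unfolding smooth_on_def by blast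

lemma smooth_on_UNIV_C1_along:
  assumes "smooth_on UNIV f" "b \<in> Basis"
  shows "C1_along b f"
  using smooth_on_continuous_iter_pd[OF assms(1), of "[]"] smooth_on_continuous_iter_pd[OF assms(1), of "[b]"]
    smooth_on_has_pdir[OF assms(1), of "[]" b] assms(2)
  by (auto simp: C1_along_def)

lemma pdir_real_eq_deriv: "pdir (1::real) f = deriv f"
  using deriv_shift_0[of f] by (simp add: pdir_def o_def add.commute fun_eq_iff)

lemma smooth_on_real_has_deriv:
  fixes f :: "real \<Rightarrow> real"
  assumes "smooth_on S f" "s \<in> S"
  shows "(f has_real_derivative deriv f s) (at s)"
proof -
  have "((\<lambda>h. f (h + s)) has_real_derivative deriv f s) (at 0)"
    using smooth_on_has_pdir[OF assms(1) _ _ assms(2), of "[]" 1]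
    by (simp add: pdir_real_eq_deriv add.commute)
  then show ?thesis
    using DERIV_shift[of f _ 0 s] by simp
qed

lemma smooth_on_real_continuous_deriv:
  fixes f :: "real \<Rightarrow> real"
  shows "smooth_on S f \<Longrightarrow> continuous_on S (deriv f)"
  using smooth_on_continuous_iter_pd[of S f "[1]"] by (simp add: pdir_real_eq_deriv)

section \<open>Positive definite matrices and the metric\<close>

lemma invertible_if_posdef:
  fixes S :: "real^'n^'n"
  assumes "\<And>v. v \<noteq> 0 \<Longrightarrow> v \<bullet> (S *v v) > 0"
  shows "invertible S"
  unfolding invertible_left_inverse matrix_left_invertible_ker
  using assms by force

text \<open>Along the segment from the identity to S all matrices are positive definite, hence
  invertible, so the determinant cannot change sign.\<close>
lemma det_pos_if_posdef:
  fixes S :: "real^'n^'n"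
  assumes pd: "\<And>v. v \<noteq> 0 \<Longrightarrow> v \<bullet> (S *v v) > 0"
  shows "det S > 0"
proof (rule ccontr)
  assume "\<not> det S > 0"
  define A where "A t = t *\<^sub>R S + (1 - t) *\<^sub>R (mat 1 :: real^'n^'n)" for t :: real
  have "continuous_on {0..1} (\<lambda>t. det (A t))"
    unfolding det_def A_def by (intro continuous_intros)
  moreover have "det (A 1) \<le> 0" "det (A 0) = 1"
    using \<open>\<not> det S > 0\<close> by (simp_all add: A_def)
  ultimately obtain t where t: "0 \<le> t" "t \<le> 1" "det (A t) = 0"
    using IVT2'[of "\<lambda>t. det (A t)" 1 0 0] by auto
  have "invertible (A t)"
  proof (rule invertible_if_posdef)
    fix v :: "real^'n"
    assume "v \<noteq> 0"
    then have "v \<bullet> (S *v v) > 0" "v \<bullet> v > 0"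
      using pd by auto
    moreover have "v \<bullet> (A t *v v) = t * (v \<bullet> (S *v v)) + (1 - t) * (v \<bullet> v)"
      by (simp add: A_def matrix_vector_mult_add_rdistrib scaleR_matrix_vector_assoc[symmetric]
          inner_add_right)
    ultimately show "v \<bullet> (A t *v v) > 0"
      using t by (cases "t = 0") (auto intro!: add_pos_nonneg)
  qed
  then show False
    using t(3) by (simp add: invertible_det_nz)
qed

lemma matrix_mul_matrix_inv:
  fixes S :: "real^'n^'n"
  assumes "invertible S"
  shows "S ** matrix_inv S = mat 1"
proof -
  have "\<exists>A'. S ** A' = mat 1 \<and> A' ** S = mat 1"
    using assms unfolding invertible_def .
  then have "S ** matrix_inv S = mat 1 \<and> matrix_inv S ** S = mat 1"
    unfolding matrix_inv_def by (rule someI_ex)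
  then show ?thesis
    by simp
qed

lemma matrix_inv_Cramer:
  fixes S :: "real^'n^'n"
  assumes "det S \<noteq> 0"
  shows "matrix_inv S $ i $ j = det (\<chi> r c. if c = i then axis j 1 $ r else S $ r $ c) / det S"
proof -
  have "invertible S"
    using assms by (simp add: invertible_det_nz)
  then have "S *v (matrix_inv S *v axis j 1) = axis j 1"
    by (simp add: matrix_mul_matrix_inv matrix_vector_mul_assoc)
  then have "matrix_inv S *v axis j 1 = (\<chi> k. det (\<chi> r c. if c = k then axis j 1 $ r else S $ r $ c) / det S)"
    using cramer[OF assms] by blast
  then have "(matrix_inv S *v axis j 1) $ i = det (\<chi> r c. if c = i then axis j 1 $ r else S $ r $ c) / det S"
    by simp
  then show ?thesis
    by (simp add: matrix_vector_mult_basis column_def)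
qed

lemma matrix_inv_symmetric:
  fixes S :: "real^'n^'n"
  assumes "transpose S = S" "invertible S"
  shows "transpose (matrix_inv S) = matrix_inv S"
proof -
  let ?B = "matrix_inv S"
  have "transpose ?B ** S = mat 1"
    by (metis assms matrix_mul_matrix_inv matrix_transpose_mul transpose_mat)
  then have "transpose ?B = transpose ?B ** (S ** ?B)"
    using matrix_mul_matrix_inv[OF assms(2)] by (simp add: matrix_mul_rid)
  also have "\<dots> = ?B"
    by (simp add: matrix_mul_assoc \<open>transpose ?B ** S = mat 1\<close> matrix_mul_lid)
  finally show ?thesis .
qed

lemma matrix_inv_quadratic_form_nonneg:
  fixes S :: "real^'n^'n"
  assumes pd: "\<And>v. v \<noteq> 0 \<Longrightarrow> v \<bullet> (S *v v) > 0"
  shows "0 \<le> (\<Sum>i\<in>UNIV. \<Sum>j\<in>UNIV. matrix_inv S $ i $ j * v $ i * v $ j)"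
proof -
  define u where "u = matrix_inv S *v v"
  have "S *v u = v"
    using matrix_mul_matrix_inv[OF invertible_if_posdef[OF pd]]
    by (simp add: u_def matrix_vector_mul_assoc)
  have "(\<Sum>i\<in>UNIV. \<Sum>j\<in>UNIV. matrix_inv S $ i $ j * v $ i * v $ j) = v \<bullet> u"
    by (simp add: u_def inner_vec_def matrix_vector_mult_def sum_distrib_left mult_ac)
  also have "\<dots> = u \<bullet> (S *v u)"
    by (simp add: \<open>S *v u = v\<close> inner_commute)
  also have "\<dots> \<ge> 0"
    using pd[of u] by (cases "u = 0") auto
  finally show ?thesis .
qed

lemma riemannian_metric_posdef:
  "riemannian_metric \<sigma> \<Longrightarrow> v \<noteq> 0 \<Longrightarrow> v \<bullet> (\<sigma> x *v v) > 0"
  unfolding riemannian_metric_def by blast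

lemma sig_det_pos: "riemannian_metric \<sigma> \<Longrightarrow> sig_det \<sigma> x > 0"
  unfolding sig_det_def by (rule det_pos_if_posdef) (rule riemannian_metric_posdef)

lemma sig_inv_commute:
  assumes "riemannian_metric \<sigma>"
  shows "sig_inv \<sigma> x i j = sig_inv \<sigma> x j i"
proof -
  have "invertible (\<sigma> x)"
    using assms by (intro invertible_if_posdef riemannian_metric_posdef)
  then have "transpose (matrix_inv (\<sigma> x)) = matrix_inv (\<sigma> x)"
    using assms by (intro matrix_inv_symmetric) (auto simp: riemannian_metric_def)
  then have "transpose (matrix_inv (\<sigma> x)) $ j $ i = matrix_inv (\<sigma> x) $ j $ i"
    by simp
  then show ?thesis
    by (simp add: sig_inv_def transpose_def)
qed

lemma sig_inv_quadratic_form_nonneg: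
  "riemannian_metric \<sigma> \<Longrightarrow> 0 \<le> (\<Sum>i\<in>UNIV. \<Sum>j\<in>UNIV. sig_inv \<sigma> x i j * v $ i * v $ j)"
  unfolding sig_inv_def by (rule matrix_inv_quadratic_form_nonneg) (rule riemannian_metric_posdef)

lemma L2_sigma_nonneg: "riemannian_metric \<sigma> \<Longrightarrow> 0 \<le> L2_sigma \<sigma> f"
  unfolding L2_sigma_def
  by (intro real_sqrt_ge_zero integral_nonneg_AE AE_I2 mult_nonneg_nonneg)
    (auto simp: sig_det_pos less_imp_le)

lemma
  assumes "riemannian_metric \<sigma>" "b \<in> Basis"
  shows C1_along_sqrt_sig_det: "C1_along b (\<lambda>x. sqrt (sig_det \<sigma> x))"
    and C1_along_sig_inv: "C1_along b (\<lambda>x. sig_inv \<sigma> x i j)"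
proof -
  have entries: "C1_along b (\<lambda>x. \<sigma> x $ k $ l)" for k l
    using assms by (intro smooth_on_UNIV_C1_along) (auto simp: riemannian_metric_def)
  then have det: "C1_along b (sig_det \<sigma>)"
    unfolding sig_det_def[abs_def] by (rule C1_along_det)
  then show "C1_along b (\<lambda>x. sqrt (sig_det \<sigma> x))"
    using sig_det_pos[OF assms(1)] by (intro C1_along_sqrt)
  have "sig_inv \<sigma> x i j = det (\<chi> r c. if c = i then axis j 1 $ r else \<sigma> x $ r $ c) / sig_det \<sigma> x" for x
    using sig_det_pos[OF assms(1), of x]
    unfolding sig_inv_def sig_det_def by (intro matrix_inv_Cramer) simp
  moreover have "C1_along b (\<lambda>x. if c = i then axis j 1 $ r else \<sigma> x $ r $ c)" for r c
    by (cases "c = i") (simp_all add: C1_along_const entries)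
  then have "C1_along b (\<lambda>x. det (\<chi> r c. if c = i then axis j 1 $ r else \<sigma> x $ r $ c) / sig_det \<sigma> x)"
    using sig_det_pos[OF assms(1)]
    by (intro C1_along_divide C1_along_det det) (auto simp: less_imp_neq[symmetric])
  ultimately show "C1_along b (\<lambda>x. sig_inv \<sigma> x i j)"
    by simp
qed

section \<open>Integrals of compactly supported functions\<close>

lemma integrable_continuous_compact_support:
  fixes f :: "'a::euclidean_space \<Rightarrow> real"
  assumes "continuous_on UNIV f" "compact K" "\<And>x. x \<notin> K \<Longrightarrow> f x = 0"
  shows "integrable lborel f"
proof -
  have "integrable lborel (\<lambda>x. indicator K x *\<^sub>R f x)"
    by (rule borel_integrable_compact) (use assms in \<open>auto intro: continuous_on_subset\<close>)
  moreover have "(\<lambda>x. indicator K x *\<^sub>R f x) = f"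
    using assms(3) by (auto simp: indicator_def fun_eq_iff)
  ultimately show ?thesis
    by simp
qed

lemma lborel_integral_translate:
  fixes f :: "'a::euclidean_space \<Rightarrow> real"
  assumes "f \<in> borel_measurable borel"
  shows "integral\<^sup>L lborel (\<lambda>x. f (c + x)) = integral\<^sup>L lborel f"
proof -
  have "integral\<^sup>L lborel f = integral\<^sup>L (distr lborel borel ((+) c)) f"
    by (simp add: lborel_distr_plus)
  also have "\<dots> = integral\<^sup>L lborel (\<lambda>x. f (c + x))"
    by (rule integral_distr) (use assms in auto)
  finally show ?thesis
    by simp
qed

lemma integrable_lborel_pair_compact:
  fixes F :: "real \<Rightarrow> 'a::euclidean_space \<Rightarrow> real"
  assumes "compact S" "continuous_on S (\<lambda>p. F (fst p) (snd p))"
  shows "integrable (lborel \<Otimes>\<^sub>M lborel) (\<lambda>(s, x). indicator S (s, x) * F s x)"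
proof -
  have "integrable lborel (\<lambda>p::real \<times> 'a. indicator S p *\<^sub>R F (fst p) (snd p))"
    by (rule borel_integrable_compact[OF assms])
  moreover have "(\<lambda>(s, x). indicator S (s, x) * F s x) =
      (\<lambda>p::real \<times> 'a. indicator S p *\<^sub>R F (fst p) (snd p))"
    by auto
  ultimately show ?thesis
    by (simp add: lborel_prod)
qed

lemma lborel_integral_indicator_FTC:
  fixes F f :: "real \<Rightarrow> real"
  assumes "a \<le> b" "\<And>s. s \<in> {a..b} \<Longrightarrow> (F has_real_derivative f s) (at s within {a..b})"
    and "continuous_on {a..b} f"
  shows "(LBINT s. indicator {a..b} s * f s) = F b - F a"
  using integral_FTC_atLeastAtMost[of a b F f] assms
  by (simp add: has_real_derivative_iff_has_vector_derivative)

lemma integral_diff_eq_integral_time_deriv: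
  fixes e e' :: "real \<Rightarrow> 'a::euclidean_space \<Rightarrow> real"
  assumes "t0 \<le> t" and K: "compact K"
    and cont: "continuous_on ({t0..t} \<times> UNIV) (\<lambda>p. e' (fst p) (snd p))"
    and deriv: "\<And>s x. s \<in> {t0..t} \<Longrightarrow> ((\<lambda>s. e s x) has_real_derivative e' s x) (at s within {t0..t})"
    and supp: "\<And>s x. s \<in> {t0..t} \<Longrightarrow> x \<notin> K \<Longrightarrow> e s x = 0"
    and supp': "\<And>s x. s \<in> {t0..t} \<Longrightarrow> x \<notin> K \<Longrightarrow> e' s x = 0"
    and cont_e: "\<And>s. s \<in> {t0..t} \<Longrightarrow> continuous_on UNIV (e s)"
  shows "integrable lborel (\<lambda>s. indicator {t0..t} s * integral\<^sup>L lborel (e' s))"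
    and "integral\<^sup>L lborel (e t) - integral\<^sup>L lborel (e t0) =
           integral\<^sup>L lborel (\<lambda>s. indicator {t0..t} s * integral\<^sup>L lborel (e' s))"
proof -
  have "(\<lambda>(s, x). indicator ({t0..t} \<times> K) (s, x) * e' s x) = (\<lambda>(s, x). indicator {t0..t} s * e' s x)"
    using supp' by (auto simp: indicator_def fun_eq_iff)
  then have int2: "integrable (lborel \<Otimes>\<^sub>M lborel) (\<lambda>(s, x). indicator {t0..t} s * e' s x)"
    using integrable_lborel_pair_compact[of "{t0..t} \<times> K" e'] K
    by (auto simp: compact_Times intro: continuous_on_subset[OF cont])
  have inner_time: "(LBINT s. indicator {t0..t} s * e' s x) = e t x - e t0 x" for x
  proof -
    have "continuous_on {t0..t} (\<lambda>s. (s, x))"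
      by (intro continuous_intros)
    then have "continuous_on {t0..t} (\<lambda>s. e' s x)"
      using continuous_on_compose2[OF cont, of "{t0..t}" "\<lambda>s. (s, x)"] by auto
    then show ?thesis
      using deriv by (intro lborel_integral_indicator_FTC \<open>t0 \<le> t\<close>)
  qed
  show "integrable lborel (\<lambda>s. indicator {t0..t} s * integral\<^sup>L lborel (e' s))"
    using lborel_pair.integrable_fst[OF int2] by simp
  have "integrable lborel (e t)" "integrable lborel (e t0)"
    using cont_e supp \<open>t0 \<le> t\<close> K by (auto intro!: integrable_continuous_compact_support)
  moreover have "(LBINT x. LBINT s. indicator {t0..t} s * e' s x) =
      (LBINT s. LBINT x. indicator {t0..t} s * e' s x)"
    using lborel_pair.Fubini_integral[OF int2] by simp
  ultimately show "integral\<^sup>L lborel (e t) - integral\<^sup>L lborel (e t0) =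
      integral\<^sup>L lborel (\<lambda>s. indicator {t0..t} s * integral\<^sup>L lborel (e' s))"
    by (simp add: inner_time)
qed

text \<open>Apply the previous lemma to the translates f (x + h b), 0 \<le> h \<le> 1: by translation
  invariance the left-hand side vanishes and the right-hand side is the integral of pdir b f.\<close>
lemma integral_pdir_eq_0:
  fixes f :: "'a::euclidean_space \<Rightarrow> real"
  assumes f: "C1_along b f" and K: "compact K" and supp: "\<And>x. x \<notin> K \<Longrightarrow> f x = 0"
  shows "integral\<^sup>L lborel (pdir b f) = 0"
proof -
  note fD = C1_alongD[OF f]
  define K' where "K' = (\<lambda>p. snd p - fst p *\<^sub>R b) ` ({0..1::real} \<times> K)"
  have "compact K'"
    unfolding K'_def by (intro compact_continuous_image compact_Times K continuous_intros) auto
  have out: "x + h *\<^sub>R b \<notin> K" if "h \<in> {0..1}" "x \<notin> K'" for h x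
  proof
    assume "x + h *\<^sub>R b \<in> K"
    then have "(h, x + h *\<^sub>R b) \<in> {0..1} \<times> K"
      using that(1) by simp
    then have "x \<in> K'"
      unfolding K'_def by (rule rev_image_eqI) simp
    with that(2) show False ..
  qed
  have measurable: "f \<in> borel_measurable borel" "pdir b f \<in> borel_measurable borel"
    using fD by (auto intro: borel_measurable_continuous_onI)
  have "integral\<^sup>L lborel (\<lambda>x. f (x + 1 *\<^sub>R b)) - integral\<^sup>L lborel (\<lambda>x. f (x + 0 *\<^sub>R b)) =
      (LBINT h. indicator {0..1} h * integral\<^sup>L lborel (\<lambda>x. pdir b f (x + h *\<^sub>R b)))"
  proof (rule integral_diff_eq_integral_time_deriv(2)[OF _ \<open>compact K'\<close>])
    show "continuous_on ({0..1} \<times> UNIV) (\<lambda>p. pdir b f (snd p + fst p *\<^sub>R b))"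
      by (rule continuous_on_compose2[OF fD(2)]) (auto intro!: continuous_intros)
    show "((\<lambda>h. f (x + h *\<^sub>R b)) has_real_derivative pdir b f (x + h *\<^sub>R b)) (at h within {0..1})"
      for h x
      using DERIV_along_line[of UNIV f b "pdir b f"] fD(3) by (auto intro: has_field_derivative_at_within)
    show "f (x + h *\<^sub>R b) = 0" "pdir b f (x + h *\<^sub>R b) = 0" if "h \<in> {0..1}" "x \<notin> K'" for h x
      using out[OF that] supp pdir_eq_0_outside_closed[OF f compact_imp_closed[OF K] _ supp] by auto
    show "continuous_on UNIV (\<lambda>x. f (x + h *\<^sub>R b))" for h
      by (rule continuous_on_compose2[OF fD(1)]) (auto intro!: continuous_intros)
  qed simp
  moreover have "integral\<^sup>L lborel (\<lambda>x. f (x + 1 *\<^sub>R b)) = integral\<^sup>L lborel (\<lambda>x. f (x + 0 *\<^sub>R b))"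
    using lborel_integral_translate[OF measurable(1), of b] by (simp add: add.commute)
  moreover have "integral\<^sup>L lborel (\<lambda>x. pdir b f (x + h *\<^sub>R b)) = integral\<^sup>L lborel (pdir b f)" for h
    using lborel_integral_translate[OF measurable(2), of "h *\<^sub>R b"] by (simp add: add.commute)
  ultimately show ?thesis
    by (simp add: mult.commute)
qed

lemma Cauchy_Schwarz_integral:
  fixes f g :: "'a \<Rightarrow> real"
  assumes f2: "integrable M (\<lambda>x. (f x)\<^sup>2)" and g2: "integrable M (\<lambda>x. (g x)\<^sup>2)"
    and fg: "integrable M (\<lambda>x. f x * g x)"
  shows "integral\<^sup>L M (\<lambda>x. f x * g x) \<le> sqrt (integral\<^sup>L M (\<lambda>x. (f x)\<^sup>2)) * sqrt (integral\<^sup>L M (\<lambda>x. (g x)\<^sup>2))"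
proof -
  define \<alpha> where "\<alpha> = sqrt (integral\<^sup>L M (\<lambda>x. (f x)\<^sup>2))"
  define \<beta> where "\<beta> = sqrt (integral\<^sup>L M (\<lambda>x. (g x)\<^sup>2))"
  have \<alpha>: "\<alpha>\<^sup>2 = integral\<^sup>L M (\<lambda>x. (f x)\<^sup>2)" and \<beta>: "\<beta>\<^sup>2 = integral\<^sup>L M (\<lambda>x. (g x)\<^sup>2)"
    unfolding \<alpha>_def \<beta>_def by (simp_all add: integral_nonneg_AE)
  have "2 * (\<alpha> * \<beta>) * (f x * g x) \<le> \<beta>\<^sup>2 * (f x)\<^sup>2 + \<alpha>\<^sup>2 * (g x)\<^sup>2" for x
  proof -
    have "0 \<le> (\<beta> * f x - \<alpha> * g x)\<^sup>2"
      by simp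
    then show ?thesis
      by (simp add: power2_eq_square algebra_simps)
  qed
  then have "integral\<^sup>L M (\<lambda>x. 2 * (\<alpha> * \<beta>) * (f x * g x))
      \<le> integral\<^sup>L M (\<lambda>x. \<beta>\<^sup>2 * (f x)\<^sup>2 + \<alpha>\<^sup>2 * (g x)\<^sup>2)"
    using f2 g2 fg by (intro integral_mono) auto
  also have "\<dots> = 2 * (\<alpha> * \<beta>) * (\<alpha> * \<beta>)"
    using f2 g2 by (simp add: \<alpha>[symmetric] \<beta>[symmetric]) (simp add: power2_eq_square)
  finally have key: "\<alpha> * \<beta> * integral\<^sup>L M (\<lambda>x. f x * g x) \<le> (\<alpha> * \<beta>)\<^sup>2"
    by (simp add: power2_eq_square)
  show ?thesis
  proof (cases "\<alpha> * \<beta> > 0")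
    case True
    then have "integral\<^sup>L M (\<lambda>x. f x * g x) \<le> \<alpha> * \<beta>"
      using key mult_le_cancel_left_pos[OF True] by (simp add: power2_eq_square)
    then show ?thesis
      by (simp add: \<alpha>_def \<beta>_def)
  next
    case False
    then have "\<alpha> = 0 \<or> \<beta> = 0"
      by (simp add: \<alpha>_def \<beta>_def integral_nonneg_AE less_le)
    then have "AE x in M. (f x)\<^sup>2 = 0 \<or> (g x)\<^sup>2 = 0"
      using f2 g2 by (auto simp: \<alpha>_def \<beta>_def integral_nonneg_eq_0_iff_AE elim: AE_mp)
    then have "integral\<^sup>L M (\<lambda>x. f x * g x) = 0"
      by (intro integral_eq_zero_AE) auto
    then show ?thesis
      by simp
  qed
qed

lemma ennreal_integral_le_nn_integral:
  fixes f g :: "'a \<Rightarrow> real"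
  assumes "integrable M f" "\<And>x. f x \<le> g x"
  shows "ennreal (integral\<^sup>L M f) \<le> (\<integral>\<^sup>+ x. ennreal (g x) \<partial>M)"
proof -
  have "integral\<^sup>L M f \<le> integral\<^sup>L M (\<lambda>x. max 0 (f x))"
    using assms by (intro integral_mono integrable_max) auto
  then have "ennreal (integral\<^sup>L M f) \<le> ennreal (integral\<^sup>L M (\<lambda>x. max 0 (f x)))"
    by (rule ennreal_leI)
  also have "\<dots> = (\<integral>\<^sup>+ x. ennreal (max 0 (f x)) \<partial>M)"
    using assms by (intro nn_integral_eq_integral[symmetric] integrable_max) auto
  also have "\<dots> \<le> (\<integral>\<^sup>+ x. ennreal (g x) \<partial>M)"
    using assms by (intro nn_integral_mono) (simp add: ennreal_max_0 ennreal_leI)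
  finally show ?thesis .
qed

lemma double_sum_symmetric:
  fixes M :: "'n::finite \<Rightarrow> 'n \<Rightarrow> real" and A B :: "'n \<Rightarrow> real"
  assumes "\<And>i j. M i j = M j i"
  shows "(\<Sum>i\<in>UNIV. \<Sum>j\<in>UNIV. M i j * (A i * B j + B i * A j))
       = 2 * (\<Sum>i\<in>UNIV. \<Sum>j\<in>UNIV. M i j * A i * B j)"
proof -
  have "(\<Sum>i\<in>UNIV. \<Sum>j\<in>UNIV. M i j * (B i * A j)) = (\<Sum>j\<in>UNIV. \<Sum>i\<in>UNIV. M i j * (B i * A j))"
    by (rule sum.swap)
  also have "\<dots> = (\<Sum>i\<in>UNIV. \<Sum>j\<in>UNIV. M i j * A i * B j)"
    by (simp add: assms mult.commute mult.left_commute)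
  finally show ?thesis
    by (simp add: distrib_left sum.distrib mult.assoc)
qed

lemma le_sqrt_add_if_square_le:
  fixes M E c :: real
  assumes "0 \<le> M" "0 \<le> E" "0 \<le> c" "M\<^sup>2 \<le> E + c * M"
  shows "M \<le> sqrt E + c"
proof (rule ccontr)
  assume "\<not> M \<le> sqrt E + c"
  then have less: "sqrt E + c < M"
    by simp
  have "0 < M"
    using less assms(2,3) real_sqrt_ge_zero[of E] by linarith
  then have "M * (sqrt E + c) < M * M"
    using less by (rule mult_strict_left_mono[rotated])
  moreover have "sqrt E * sqrt E \<le> M * sqrt E"
    using less assms(2,3) by (intro mult_right_mono) auto
  ultimately show False
    using assms(2,4) by (simp add: power2_eq_square algebra_simps)
qed

text \<open>Applied with m the supremum M of sqrt E, the hypothesis gives M^2 <= E s0 + c M.\<close>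
lemma sqrt_le_if_self_bounded:
  fixes E :: "'a \<Rightarrow> real"
  assumes "s0 \<in> S" "s \<in> S" and nonneg: "\<And>r. r \<in> S \<Longrightarrow> 0 \<le> E r" and "0 \<le> c"
    and bdd: "\<And>r. r \<in> S \<Longrightarrow> E r \<le> B"
    and self_bound: "\<And>m r. 0 < m \<Longrightarrow> (\<And>q. q \<in> S \<Longrightarrow> sqrt (E q) \<le> m) \<Longrightarrow> r \<in> S
      \<Longrightarrow> E r \<le> E s0 + c * m"
  shows "sqrt (E s) \<le> sqrt (E s0) + c"
proof -
  define M where "M = (SUP r\<in>S. sqrt (E r))"
  have "bdd_above ((\<lambda>r. sqrt (E r)) ` S)"
    by (rule bdd_aboveI2[where M="sqrt B"]) (use bdd in auto)
  then have le_M: "sqrt (E r) \<le> M" if "r \<in> S" for r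
    unfolding M_def using that by (rule cSUP_upper[rotated])
  have E0: "0 \<le> E s0"
    using nonneg[OF \<open>s0 \<in> S\<close>] .
  show ?thesis
  proof (cases "0 < M")
    case False
    then show ?thesis
      using le_M[OF \<open>s \<in> S\<close>] real_sqrt_ge_zero[OF E0] \<open>0 \<le> c\<close> by linarith
  next
    case True
    have "M \<le> sqrt (E s0 + c * M)"
      unfolding M_def
    proof (rule cSUP_least)
      show "S \<noteq> {}"
        using \<open>s0 \<in> S\<close> by blast
      show "sqrt (E r) \<le> sqrt (E s0 + c * (SUP r\<in>S. sqrt (E r)))" if "r \<in> S" for r
        using self_bound[OF True le_M that] by (simp add: M_def)
    qed
    then have "M\<^sup>2 \<le> (sqrt (E s0 + c * M))\<^sup>2"
      using True by (intro power_mono) auto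
    then have "M\<^sup>2 \<le> E s0 + c * M"
      using E0 \<open>0 \<le> c\<close> True by simp
    then have "M \<le> sqrt (E s0) + c"
      using True E0 \<open>0 \<le> c\<close> by (intro le_sqrt_add_if_square_le) auto
    then show ?thesis
      using le_M[OF \<open>s \<in> S\<close>] by simp
  qed
qed

section \<open>The energy estimate\<close>

locale flrw_wave =
  fixes a :: "real \<Rightarrow> real" and \<sigma> :: "real^'n \<Rightarrow> real^'n^'n" and t0 T :: real
    and \<phi> :: "real \<Rightarrow> real^'n \<Rightarrow> real" and U :: "(real \<times> (real^'n)) set" and K :: "(real^'n) set"
  assumes t0_pos: "t0 > 0"
    and a_smooth: "smooth_on {0<..} a"
    and a_pos: "\<And>t. t \<ge> t0 \<Longrightarrow> a t > 0"
    and a_incr: "\<And>t. t \<ge> t0 \<Longrightarrow> deriv a t > 0"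
    and sigma_riem: "riemannian_metric \<sigma>"
    and open_U: "open U" and U_supset: "{t0..<T} \<times> UNIV \<subseteq> U"
    and phi_smooth: "smooth_on U (\<lambda>(t, x). \<phi> t x)"
    and compact_K: "compact K" and phi_supp: "\<And>t x. t \<in> {t0..<T} \<Longrightarrow> x \<notin> K \<Longrightarrow> \<phi> t x = 0"
begin

declare iter_pd.simps(2)[simp del]

definition Phi :: "real \<times> (real^'n) \<Rightarrow> real" where
  "Phi = (\<lambda>(t, x). \<phi> t x)"

abbreviation dir_t :: "real \<times> (real^'n)" where
  "dir_t \<equiv> (1, 0)"

abbreviation dir_x :: "'n \<Rightarrow> real \<times> (real^'n)" where
  "dir_x i \<equiv> (0, axis i 1)"

abbreviation dphi :: "(real \<times> (real^'n)) list \<Rightarrow> real \<Rightarrow> real^'n \<Rightarrow> real" where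
  "dphi ds s x \<equiv> iter_pd ds Phi (s, x)"

lemma dir_t_Basis [simp]: "dir_t \<in> Basis"
  by (simp add: Basis_prod_def)

lemma dir_x_Basis [simp]: "dir_x i \<in> Basis"
  by (simp add: Basis_prod_def axis_in_Basis_iff)

lemma Basis_cases: "b \<in> Basis \<Longrightarrow> b = dir_t \<or> (\<exists>i. b = dir_x i)"
  by (auto simp: Basis_prod_def Basis_vec_def)

lemma mem_U: "s \<in> {t0..<T} \<Longrightarrow> (s, x) \<in> U"
  using U_supset by blast

lemma dt_eq_dphi: "dt \<phi> s x = dphi [dir_t] s x"
  using deriv_shift_0[of "\<lambda>s'. \<phi> s' x" s]
  by (simp add: iter_pd.simps dt_def pdir_def Phi_def o_def)

lemma dt_dt_eq_dphi: "dt (dt \<phi>) s x = dphi [dir_t, dir_t] s x"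
  using deriv_shift_0[of "\<lambda>s'. dphi [dir_t] s' x" s]
  by (simp add: dt_def[of "dt \<phi>"] dt_eq_dphi iter_pd.simps(2)[of dir_t] pdir_def o_def)

lemma dxi_eq_dphi: "dxi i (\<phi> s) x = dphi [dir_x i] s x"
  by (simp add: iter_pd.simps dxi_def pdir_def Phi_def)

lemma dphi_has_dt:
  assumes "(s, x) \<in> U" "set ds \<subseteq> Basis"
  shows "((\<lambda>s'. dphi ds s' x) has_real_derivative dphi (dir_t # ds) s x) (at s)"
proof -
  have "((\<lambda>h. iter_pd ds Phi ((s, x) + h *\<^sub>R dir_t)) has_real_derivative dphi (dir_t # ds) s x) (at 0)"
    using phi_smooth assms by (intro smooth_on_has_pdir) (auto simp: Phi_def)
  then show ?thesis
    using DERIV_shift[of "\<lambda>s'. dphi ds s' x" _ 0 s] by (simp add: add.commute)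
qed

lemma dphi_has_dxi:
  assumes "(s, x) \<in> U" "set ds \<subseteq> Basis"
  shows "((\<lambda>h. dphi ds s (x + h *\<^sub>R axis i 1)) has_real_derivative dphi (dir_x i # ds) s x) (at 0)"
  using smooth_on_has_pdir[of U Phi ds "dir_x i" "(s, x)"] phi_smooth assms by (simp add: Phi_def)

lemma continuous_on_dphi:
  assumes "t < T" "set ds \<subseteq> Basis"
  shows "continuous_on ({t0..t} \<times> UNIV) (\<lambda>p. dphi ds (fst p) (snd p))"
proof -
  have "continuous_on U (iter_pd ds Phi)"
    using phi_smooth assms(2) by (intro smooth_on_continuous_iter_pd) (auto simp: Phi_def)
  moreover have "{t0..t} \<times> UNIV \<subseteq> U"
    using assms(1) U_supset by auto
  ultimately show ?thesis
    by (auto intro: continuous_on_subset)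
qed

lemma continuous_on_dphi_slice:
  assumes "s \<in> {t0..<T}" "set ds \<subseteq> Basis"
  shows "continuous_on UNIV (dphi ds s)"
proof -
  have "continuous_on ({t0..s} \<times> UNIV) (\<lambda>p. dphi ds (fst p) (snd p))"
    using assms by (intro continuous_on_dphi) auto
  moreover have "continuous_on UNIV (\<lambda>x::real^'n. (s, x))" "(\<lambda>x. (s, x)) ` UNIV \<subseteq> {t0..s} \<times> UNIV"
    using assms(1) by (auto intro!: continuous_intros)
  ultimately show ?thesis
    using continuous_on_compose2 by fastforce
qed

lemma
  assumes "s \<in> {t0..<T}" "set ds \<subseteq> Basis"
  shows C1_along_dphi: "C1_along (axis i 1) (dphi ds s)"
    and pdir_dphi: "pdir (axis i 1) (dphi ds s) = dphi (dir_x i # ds) s"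
  using C1_alongI[OF continuous_on_dphi_slice continuous_on_dphi_slice dphi_has_dxi] mem_U assms by auto

lemma dphi_eq_0_outside:
  "set ds \<subseteq> Basis \<Longrightarrow> s \<in> {t0..<T} \<Longrightarrow> x \<notin> K \<Longrightarrow> dphi ds s x = 0"
proof (induction ds arbitrary: s x)
  case Nil
  then show ?case
    by (simp add: Phi_def phi_supp)
next
  case (Cons b ds)
  have "b \<in> Basis"
    using Cons.prems(1) by simp
  then consider "b = dir_t" | i where "b = dir_x i"
    using Basis_cases by blast
  moreover have "(s, x) \<in> U" "set ds \<subseteq> Basis"
    using Cons.prems mem_U by auto
  ultimately show ?case
  proof cases
    case 1
    show ?thesis
      using DERIV_eq_0_if_vanishing_right[OF dphi_has_dt[OF \<open>(s, x) \<in> U\<close> \<open>set ds \<subseteq> Basis\<close>]]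
        Cons 1 by auto
  next
    case 2
    have "((\<lambda>h. dphi ds s (x + h *\<^sub>R axis i 1)) has_real_derivative 0) (at 0)"
      using Cons compact_imp_closed[OF compact_K] by (intro DERIV_along_line_outside_closed) auto
    then show ?thesis
      using DERIV_unique[OF dphi_has_dxi[OF \<open>(s, x) \<in> U\<close> \<open>set ds \<subseteq> Basis\<close>]] 2 by auto
  qed
qed

lemma dphi_dt_dx_commute:
  assumes "(s, x) \<in> U"
  shows "dphi [dir_t, dir_x i] s x = dphi [dir_x i, dir_t] s x"
proof (rule mixed_dir_derivs_commute[OF open_U assms, of Phi "dir_x i" "iter_pd [dir_x i] Phi"
      "dir_t" "iter_pd [dir_t] Phi" "iter_pd [dir_t, dir_x i] Phi" "iter_pd [dir_x i, dir_t] Phi"])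
  have deriv: "((\<lambda>h. iter_pd ds Phi (q + h *\<^sub>R b)) has_real_derivative iter_pd (b # ds) Phi q) (at 0)"
    if "q \<in> U" "set ds \<subseteq> Basis" "b \<in> Basis" for q ds b
    using smooth_on_has_pdir[of U Phi] phi_smooth that by (simp add: Phi_def)
  fix q
  assume "q \<in> U"
  show "((\<lambda>h. Phi (q + h *\<^sub>R dir_x i)) has_real_derivative iter_pd [dir_x i] Phi q) (at 0)"
    using deriv[OF \<open>q \<in> U\<close>, of "[]" "dir_x i"] by simp
  show "((\<lambda>h. Phi (q + h *\<^sub>R dir_t)) has_real_derivative iter_pd [dir_t] Phi q) (at 0)"
    using deriv[OF \<open>q \<in> U\<close>, of "[]" dir_t] by simp
  show "((\<lambda>h. iter_pd [dir_x i] Phi (q + h *\<^sub>R dir_t)) has_real_derivative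
      iter_pd [dir_t, dir_x i] Phi q) (at 0)"
    using deriv[OF \<open>q \<in> U\<close>, of "[dir_x i]" dir_t] by simp
  show "((\<lambda>h. iter_pd [dir_t] Phi (q + h *\<^sub>R dir_x i)) has_real_derivative
      iter_pd [dir_x i, dir_t] Phi q) (at 0)"
    using deriv[OF \<open>q \<in> U\<close>, of "[dir_t]" "dir_x i"] by simp
next
  have "isCont (iter_pd ds Phi) (s, x)" if "set ds \<subseteq> Basis" for ds
    using smooth_on_continuous_iter_pd[of U Phi ds] phi_smooth that open_U assms
    by (simp add: Phi_def continuous_on_eq_continuous_at)
  then show "isCont (iter_pd [dir_t, dir_x i] Phi) (s, x)" "isCont (iter_pd [dir_x i, dir_t] Phi) (s, x)"
    by simp_all
qed

definition vol :: "real^'n \<Rightarrow> real" where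
  "vol x = sqrt (sig_det \<sigma> x)"

lemma vol_pos: "vol x > 0"
  using sig_det_pos[OF sigma_riem] by (simp add: vol_def)

lemma C1_along_vol: "C1_along (axis i 1) vol"
  unfolding vol_def[abs_def] by (rule C1_along_sqrt_sig_det[OF sigma_riem]) (simp add: axis_in_Basis_iff)

lemma continuous_on_vol: "continuous_on UNIV vol"
  using C1_alongD(1)[OF C1_along_vol] .

lemma continuous_on_sig_inv: "continuous_on UNIV (\<lambda>x. sig_inv \<sigma> x i j)"
  using C1_alongD(1)[OF C1_along_sig_inv[OF sigma_riem, of "axis i 1"]] by (simp add: axis_in_Basis_iff)

definition flux :: "'n \<Rightarrow> real \<Rightarrow> real^'n \<Rightarrow> real" where
  "flux i s y = (\<Sum>j\<in>UNIV. sig_inv \<sigma> y i j * vol y * dphi [dir_x j] s y)"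

lemma C1_along_flux: "s \<in> {t0..<T} \<Longrightarrow> C1_along (axis i 1) (flux i s)"
  unfolding flux_def[abs_def]
  by (intro C1_along_sum C1_along_mult C1_along_sig_inv[OF sigma_riem] C1_along_vol C1_along_dphi)
    (auto simp: axis_in_Basis_iff)

lemma flux_eq_0_outside: "s \<in> {t0..<T} \<Longrightarrow> x \<notin> K \<Longrightarrow> flux i s x = 0"
  by (simp add: flux_def dphi_eq_0_outside)

lemma pdir_flux_eq_0_outside: "s \<in> {t0..<T} \<Longrightarrow> x \<notin> K \<Longrightarrow> pdir (axis i 1) (flux i s) x = 0"
  using pdir_eq_0_outside_closed[OF C1_along_flux compact_imp_closed[OF compact_K]] flux_eq_0_outside
  by blast

lemma box_g_eq:
  "box_g a \<sigma> \<phi> s x = - dphi [dir_t, dir_t] s x - real CARD('n) * (deriv a s / a s) * dphi [dir_t] s x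
     + 1 / (a s)\<^sup>2 * (1 / vol x * (\<Sum>i\<in>UNIV. pdir (axis i 1) (flux i s) x))"
  by (simp add: box_g_def lap_sigma_def dt_dt_eq_dphi dt_eq_dphi dxi_eq_dphi)
    (simp add: flux_def[abs_def] vol_def dxi_eq_pdir)

lemma continuous_on_box_g: "s \<in> {t0..<T} \<Longrightarrow> continuous_on UNIV (box_g a \<sigma> \<phi> s)"
  unfolding box_g_eq[abs_def]
  using continuous_on_dphi_slice[of s "[dir_t]"] continuous_on_dphi_slice[of s "[dir_t, dir_t]"]
    C1_alongD(2)[OF C1_along_flux] continuous_on_vol vol_pos a_pos[of s]
  by (auto intro!: continuous_intros simp: less_imp_neq[symmetric])

lemma box_g_eq_0_outside: "s \<in> {t0..<T} \<Longrightarrow> x \<notin> K \<Longrightarrow> box_g a \<sigma> \<phi> s x = 0"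
  by (simp add: box_g_eq dphi_eq_0_outside pdir_flux_eq_0_outside)

definition energy_density :: "real \<Rightarrow> real^'n \<Rightarrow> real" where
  "energy_density s x = ((a s)\<^sup>2 * (dphi [dir_t] s x)\<^sup>2
     + (\<Sum>i\<in>UNIV. \<Sum>j\<in>UNIV. sig_inv \<sigma> x i j * dphi [dir_x i] s x * dphi [dir_x j] s x)) * vol x"

lemma energy_eq: "energy a \<sigma> \<phi> s = 1/2 * integral\<^sup>L lborel (energy_density s)"
  by (simp add: energy_def dt_eq_dphi dxi_eq_dphi energy_density_def[abs_def] vol_def)

lemma kinetic_le_energy_density: "(a s * dphi [dir_t] s x)\<^sup>2 * vol x \<le> energy_density s x"
proof -
  have "0 \<le> (\<Sum>i\<in>UNIV. \<Sum>j\<in>UNIV. sig_inv \<sigma> x i j * (\<chi> k. dphi [dir_x k] s x) $ i * (\<chi> k. dphi [dir_x k] s x) $ j)"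
    by (rule sig_inv_quadratic_form_nonneg[OF sigma_riem])
  then show ?thesis
    using vol_pos[of x] by (simp add: energy_density_def power_mult_distrib algebra_simps)
qed

lemma energy_density_nonneg: "0 \<le> energy_density s x"
  using kinetic_le_energy_density[of s x] vol_pos[of x] by (meson order_trans zero_le_power2 mult_nonneg_nonneg less_imp_le)

lemma continuous_on_energy_density: "s \<in> {t0..<T} \<Longrightarrow> continuous_on UNIV (energy_density s)"
  unfolding energy_density_def[abs_def]
  using continuous_on_dphi_slice[of s "[dir_t]"] continuous_on_dphi_slice[of s "[dir_x i]" for i]
    continuous_on_sig_inv continuous_on_vol
  by (auto intro!: continuous_intros)

lemma energy_density_eq_0_outside: "s \<in> {t0..<T} \<Longrightarrow> x \<notin> K \<Longrightarrow> energy_density s x = 0"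
  by (simp add: energy_density_def dphi_eq_0_outside)

definition energy_density_dt :: "real \<Rightarrow> real^'n \<Rightarrow> real" where
  "energy_density_dt s x = (2 * a s * deriv a s * (dphi [dir_t] s x)\<^sup>2
     + 2 * (a s)\<^sup>2 * dphi [dir_t] s x * dphi [dir_t, dir_t] s x
     + (\<Sum>i\<in>UNIV. \<Sum>j\<in>UNIV. sig_inv \<sigma> x i j *
          (dphi [dir_t, dir_x i] s x * dphi [dir_x j] s x + dphi [dir_x i] s x * dphi [dir_t, dir_x j] s x)))
     * vol x"

lemma energy_density_has_dt:
  assumes s: "s \<in> {t0..<T}"
  shows "((\<lambda>s. energy_density s x) has_real_derivative energy_density_dt s x) (at s)"
proof -
  have da: "(a has_real_derivative deriv a s) (at s)"
    using smooth_on_real_has_deriv[OF a_smooth] t0_pos s by auto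
  have d: "((\<lambda>s. dphi [b] s x) has_real_derivative dphi [dir_t, b] s x) (at s)" if "b \<in> Basis" for b
    using dphi_has_dt[OF mem_U[OF s], of "[b]"] that by simp
  have "((\<lambda>s. (a s * a s * (dphi [dir_t] s x * dphi [dir_t] s x)
      + (\<Sum>i\<in>UNIV. \<Sum>j\<in>UNIV. sig_inv \<sigma> x i j * (dphi [dir_x i] s x * dphi [dir_x j] s x))) * vol x)
    has_real_derivative
      ((deriv a s * a s + deriv a s * a s) * (dphi [dir_t] s x * dphi [dir_t] s x)
        + (dphi [dir_t, dir_t] s x * dphi [dir_t] s x + dphi [dir_t, dir_t] s x * dphi [dir_t] s x) * (a s * a s)
      + (\<Sum>i\<in>UNIV. \<Sum>j\<in>UNIV. sig_inv \<sigma> x i j *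
          (dphi [dir_t, dir_x i] s x * dphi [dir_x j] s x + dphi [dir_t, dir_x j] s x * dphi [dir_x i] s x)))
      * vol x) (at s)"
    by (intro DERIV_cmult_right DERIV_add DERIV_mult DERIV_sum DERIV_cmult da d) simp_all
  then show ?thesis
    by (simp add: energy_density_def[abs_def] energy_density_dt_def power2_eq_square algebra_simps)
qed

lemma continuous_on_energy_density_dt:
  assumes "t < T"
  shows "continuous_on ({t0..t} \<times> UNIV) (\<lambda>p. energy_density_dt (fst p) (snd p))"
proof -
  let ?S = "{t0..t} \<times> (UNIV :: (real^'n) set)"
  have time: "continuous_on ?S (\<lambda>p. f (fst p))" if "continuous_on {0<..} f" for f
    using t0_pos by (intro continuous_on_compose2[OF that]) (auto intro!: continuous_intros)
  have space: "continuous_on ?S (\<lambda>p. f (snd p))" if "continuous_on UNIV f" for f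
    by (rule continuous_on_compose2[OF that]) (auto intro!: continuous_intros)
  have "continuous_on ?S (\<lambda>p. dphi ds (fst p) (snd p))" if "set ds \<subseteq> Basis" for ds
    using continuous_on_dphi[OF assms that] .
  then show ?thesis
    unfolding energy_density_dt_def
    using time[OF smooth_on_continuous_iter_pd[OF a_smooth, of "[]"]]
      time[OF smooth_on_real_continuous_deriv[OF a_smooth]]
      space[OF continuous_on_vol] space[OF continuous_on_sig_inv]
    by (auto intro!: continuous_intros)
qed

lemma energy_density_dt_eq_0_outside: "s \<in> {t0..<T} \<Longrightarrow> x \<notin> K \<Longrightarrow> energy_density_dt s x = 0"
  by (simp add: energy_density_dt_def dphi_eq_0_outside)

lemma pdir_energy_flux:
  assumes "s \<in> {t0..<T}"
  shows "C1_along (axis i 1) (\<lambda>y. dphi [dir_t] s y * flux i s y)"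
    and "pdir (axis i 1) (\<lambda>y. dphi [dir_t] s y * flux i s y) x
      = dphi [dir_t, dir_x i] s x * flux i s x + dphi [dir_t] s x * pdir (axis i 1) (flux i s) x"
proof -
  note dt = C1_along_dphi[OF assms, of "[dir_t]"] and fl = C1_along_flux[OF assms]
  show "C1_along (axis i 1) (\<lambda>y. dphi [dir_t] s y * flux i s y)"
    using C1_along_mult[OF dt fl] by simp
  show "pdir (axis i 1) (\<lambda>y. dphi [dir_t] s y * flux i s y) x
      = dphi [dir_t, dir_x i] s x * flux i s x + dphi [dir_t] s x * pdir (axis i 1) (flux i s) x"
    using pdir_mult[OF dt fl] pdir_dphi[OF assms, of "[dir_t]"] dphi_dt_dx_commute[OF mem_U[OF assms]]
    by simp
qed

text \<open>A term of fixed sign (a is increasing and n \<ge> 1), the coupling with the wave operator,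
  and a spatial divergence that integrates to zero.\<close>
lemma energy_density_dt_eq:
  assumes s: "s \<in> {t0..<T}"
  shows "energy_density_dt s x =
      (2 - 2 * real CARD('n)) * a s * deriv a s * (dphi [dir_t] s x)\<^sup>2 * vol x
      - 2 * (a s)\<^sup>2 * dphi [dir_t] s x * box_g a \<sigma> \<phi> s x * vol x
      + 2 * (\<Sum>i\<in>UNIV. pdir (axis i 1) (\<lambda>y. dphi [dir_t] s y * flux i s y) x)"
proof -
  have "(\<Sum>i\<in>UNIV. \<Sum>j\<in>UNIV. sig_inv \<sigma> x i j *
          (dphi [dir_t, dir_x i] s x * dphi [dir_x j] s x + dphi [dir_x i] s x * dphi [dir_t, dir_x j] s x))
      = 2 * (\<Sum>i\<in>UNIV. \<Sum>j\<in>UNIV. sig_inv \<sigma> x i j * dphi [dir_t, dir_x i] s x * dphi [dir_x j] s x)"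
    by (rule double_sum_symmetric) (rule sig_inv_commute[OF sigma_riem])
  moreover have "(\<Sum>i\<in>UNIV. \<Sum>j\<in>UNIV. sig_inv \<sigma> x i j * dphi [dir_t, dir_x i] s x * dphi [dir_x j] s x) * vol x
      = (\<Sum>i\<in>UNIV. dphi [dir_t, dir_x i] s x * flux i s x)"
    unfolding flux_def sum_distrib_left sum_distrib_right by (intro sum.cong refl) (simp add: mult_ac)
  ultimately have "energy_density_dt s x =
      (2 * a s * deriv a s * (dphi [dir_t] s x)\<^sup>2 + 2 * (a s)\<^sup>2 * dphi [dir_t] s x * dphi [dir_t, dir_t] s x)
        * vol x + 2 * (\<Sum>i\<in>UNIV. dphi [dir_t, dir_x i] s x * flux i s x)"
    by (simp add: energy_density_dt_def distrib_right)
  moreover have "(\<Sum>i\<in>UNIV. pdir (axis i 1) (\<lambda>y. dphi [dir_t] s y * flux i s y) x)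
      = (\<Sum>i\<in>UNIV. dphi [dir_t, dir_x i] s x * flux i s x)
        + dphi [dir_t] s x * (\<Sum>i\<in>UNIV. pdir (axis i 1) (flux i s) x)"
    by (simp add: pdir_energy_flux(2)[OF s] sum.distrib sum_distrib_left)
  moreover have "- 2 * (a s)\<^sup>2 * dphi [dir_t] s x * box_g a \<sigma> \<phi> s x * vol x
      = 2 * (a s)\<^sup>2 * dphi [dir_t] s x * dphi [dir_t, dir_t] s x * vol x
        + 2 * real CARD('n) * a s * deriv a s * (dphi [dir_t] s x)\<^sup>2 * vol x
        - 2 * dphi [dir_t] s x * (\<Sum>i\<in>UNIV. pdir (axis i 1) (flux i s) x)"
    using a_pos[of s] vol_pos[of x] s by (simp add: box_g_eq field_simps power2_eq_square)
  ultimately show ?thesis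
    by (simp add: algebra_simps)
qed

lemma integrable_vanishing_outside:
  fixes f :: "real^'n \<Rightarrow> real"
  shows "continuous_on UNIV f \<Longrightarrow> (\<And>x. x \<notin> K \<Longrightarrow> f x = 0) \<Longrightarrow> integrable lborel f"
  by (rule integrable_continuous_compact_support[OF _ compact_K])

lemma
  assumes s: "s \<in> {t0..<T}"
  shows integrable_energy_flux_div:
      "integrable lborel (\<lambda>x. \<Sum>i\<in>UNIV. pdir (axis i 1) (\<lambda>y. dphi [dir_t] s y * flux i s y) x)"
    and integral_energy_flux_div_eq_0:
      "integral\<^sup>L lborel (\<lambda>x. \<Sum>i\<in>UNIV. pdir (axis i 1) (\<lambda>y. dphi [dir_t] s y * flux i s y) x) = 0"
proof -
  note C1 = pdir_energy_flux(1)[OF s]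
  have supp: "dphi [dir_t] s x * flux i s x = 0" if "x \<notin> K" for i x
    using dphi_eq_0_outside[of "[dir_t]"] s that by simp
  have "integrable lborel (pdir (axis i 1) (\<lambda>y. dphi [dir_t] s y * flux i s y))" for i
    using C1_alongD(2)[OF C1] pdir_eq_0_outside_closed[OF C1 compact_imp_closed[OF compact_K] _ supp]
    by (intro integrable_vanishing_outside) auto
  moreover have "integral\<^sup>L lborel (pdir (axis i 1) (\<lambda>y. dphi [dir_t] s y * flux i s y)) = 0" for i
    using integral_pdir_eq_0[OF C1 compact_K supp] .
  ultimately show "integrable lborel (\<lambda>x. \<Sum>i\<in>UNIV. pdir (axis i 1) (\<lambda>y. dphi [dir_t] s y * flux i s y) x)"
    and "integral\<^sup>L lborel (\<lambda>x. \<Sum>i\<in>UNIV. pdir (axis i 1) (\<lambda>y. dphi [dir_t] s y * flux i s y) x) = 0"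
    by (simp_all add: integral_sum)
qed

lemma integral_kinetic_le_energy:
  assumes s: "s \<in> {t0..<T}"
  shows "integral\<^sup>L lborel (\<lambda>x. (a s * dphi [dir_t] s x)\<^sup>2 * vol x) \<le> 2 * energy a \<sigma> \<phi> s"
proof -
  have "integrable lborel (\<lambda>x. (a s * dphi [dir_t] s x)\<^sup>2 * vol x)"
    using continuous_on_dphi_slice[OF s, of "[dir_t]"] continuous_on_vol dphi_eq_0_outside[of "[dir_t]"] s
    by (intro integrable_vanishing_outside continuous_on_mult continuous_on_power continuous_on_const; simp)+
  moreover have "integrable lborel (energy_density s)"
    using continuous_on_energy_density[OF s] energy_density_eq_0_outside[OF s]
    by (rule integrable_vanishing_outside)
  ultimately show ?thesis
    using kinetic_le_energy_density by (simp add: energy_eq integral_mono)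
qed

lemma integral_coupling_le:
  assumes s: "s \<in> {t0..<T}"
  shows "- integral\<^sup>L lborel (\<lambda>x. a s * dphi [dir_t] s x * box_g a \<sigma> \<phi> s x * vol x)
    \<le> sqrt (2 * energy a \<sigma> \<phi> s) * L2_sigma \<sigma> (box_g a \<sigma> \<phi> s)"
proof -
  define u where "u x = - a s * dphi [dir_t] s x * sqrt (vol x)" for x
  define v where "v x = box_g a \<sigma> \<phi> s x * sqrt (vol x)" for x
  have "continuous_on UNIV (\<lambda>x. sqrt (vol x))"
    using continuous_on_vol by (rule continuous_on_real_sqrt)
  then have cont: "continuous_on UNIV u" "continuous_on UNIV v"
    unfolding u_def[abs_def] v_def[abs_def]
    using continuous_on_dphi_slice[OF s, of "[dir_t]"] continuous_on_box_g[OF s]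
    by (intro continuous_on_mult continuous_on_const; simp)+
  have supp: "u x = 0" "v x = 0" if "x \<notin> K" for x
    using dphi_eq_0_outside[of "[dir_t]"] box_g_eq_0_outside s that by (simp_all add: u_def v_def)
  have int: "integrable lborel (\<lambda>x. (u x)\<^sup>2)" "integrable lborel (\<lambda>x. (v x)\<^sup>2)"
    "integrable lborel (\<lambda>x. u x * v x)"
    using cont supp by (intro integrable_vanishing_outside continuous_on_mult continuous_on_power; simp)+
  have uv: "u x * v x = - (a s * dphi [dir_t] s x * box_g a \<sigma> \<phi> s x * vol x)" for x
  proof -
    have "u x * v x = - (a s * dphi [dir_t] s x * box_g a \<sigma> \<phi> s x) * (sqrt (vol x) * sqrt (vol x))"
      by (simp add: u_def v_def mult_ac del: real_sqrt_mult_self)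
    then show ?thesis
      using vol_pos[of x] by simp
  qed
  have "(\<lambda>x. (u x)\<^sup>2) = (\<lambda>x. (a s * dphi [dir_t] s x)\<^sup>2 * vol x)"
    using vol_pos by (simp add: fun_eq_iff u_def power_mult_distrib less_imp_le)
  then have u2: "sqrt (integral\<^sup>L lborel (\<lambda>x. (u x)\<^sup>2)) \<le> sqrt (2 * energy a \<sigma> \<phi> s)"
    using integral_kinetic_le_energy[OF s] by simp
  have v2: "sqrt (integral\<^sup>L lborel (\<lambda>x. (v x)\<^sup>2)) = L2_sigma \<sigma> (box_g a \<sigma> \<phi> s)"
    using vol_pos by (simp add: L2_sigma_def v_def power_mult_distrib vol_def less_imp_le)
  have "0 \<le> sqrt (integral\<^sup>L lborel (\<lambda>x. (v x)\<^sup>2))"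
    by (simp add: integral_nonneg_AE)
  then have "sqrt (integral\<^sup>L lborel (\<lambda>x. (u x)\<^sup>2)) * sqrt (integral\<^sup>L lborel (\<lambda>x. (v x)\<^sup>2))
      \<le> sqrt (2 * energy a \<sigma> \<phi> s) * L2_sigma \<sigma> (box_g a \<sigma> \<phi> s)"
    unfolding v2[symmetric] by (rule mult_right_mono[OF u2])
  then show ?thesis
    using Cauchy_Schwarz_integral[OF int] by (simp add: uv)
qed

lemma hubble_friction_nonpos:
  assumes "s \<in> {t0..<T}"
  shows "(2 - 2 * real CARD('n)) * a s * deriv a s * (dphi [dir_t] s x)\<^sup>2 * vol x \<le> 0"
proof -
  have n: "2 - 2 * real CARD('n) \<le> 0"
    by simp
  have "0 \<le> a s * (deriv a s * ((dphi [dir_t] s x)\<^sup>2 * vol x))"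
    using a_pos[of s] a_incr[of s] assms vol_pos[of x] by simp
  then show ?thesis
    unfolding mult.assoc by (rule mult_nonpos_nonneg[OF n])
qed

lemma integral_energy_density_dt_le:
  assumes s: "s \<in> {t0..<T}"
  shows "integral\<^sup>L lborel (energy_density_dt s)
    \<le> 2 * a s * (sqrt (2 * energy a \<sigma> \<phi> s) * L2_sigma \<sigma> (box_g a \<sigma> \<phi> s))"
proof -
  define f1 where "f1 x = (2 - 2 * real CARD('n)) * a s * deriv a s * (dphi [dir_t] s x)\<^sup>2 * vol x" for x
  define f2 where "f2 x = a s * dphi [dir_t] s x * box_g a \<sigma> \<phi> s x * vol x" for x
  define f3 where "f3 x = (\<Sum>i\<in>UNIV. pdir (axis i 1) (\<lambda>y. dphi [dir_t] s y * flux i s y) x)" for x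
  have "energy_density_dt s = (\<lambda>x. f1 x - 2 * a s * f2 x + 2 * f3 x)"
    by (simp add: fun_eq_iff energy_density_dt_eq[OF s] f1_def f2_def f3_def power2_eq_square mult_ac)
  moreover have int1: "integrable lborel f1" and int2: "integrable lborel f2"
    unfolding f1_def[abs_def] f2_def[abs_def]
    using continuous_on_dphi_slice[OF s, of "[dir_t]"] continuous_on_box_g[OF s] continuous_on_vol
      dphi_eq_0_outside[of "[dir_t]" s] box_g_eq_0_outside[OF s] s
    by (auto intro!: integrable_vanishing_outside continuous_intros)
  moreover have int3: "integrable lborel f3"
    using integrable_energy_flux_div[OF s] by (simp add: f3_def[abs_def])
  ultimately have "integral\<^sup>L lborel (energy_density_dt s)
      = integral\<^sup>L lborel f1 - 2 * a s * integral\<^sup>L lborel f2 + 2 * integral\<^sup>L lborel f3"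
    by simp
  moreover have "integral\<^sup>L lborel f1 \<le> 0"
    using integral_mono[OF int1, of "\<lambda>_. 0"] hubble_friction_nonpos[OF s] by (simp add: f1_def)
  moreover have "integral\<^sup>L lborel f3 = 0"
    using integral_energy_flux_div_eq_0[OF s] by (simp add: f3_def[abs_def])
  moreover have "- integral\<^sup>L lborel f2 \<le> sqrt (2 * energy a \<sigma> \<phi> s) * L2_sigma \<sigma> (box_g a \<sigma> \<phi> s)"
    using integral_coupling_le[OF s] by (simp add: f2_def[abs_def])
  then have "2 * a s * (- integral\<^sup>L lborel f2)
      \<le> 2 * a s * (sqrt (2 * energy a \<sigma> \<phi> s) * L2_sigma \<sigma> (box_g a \<sigma> \<phi> s))"
    using a_pos[of s] s by (intro mult_left_mono) auto
  ultimately show ?thesis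
    by linarith
qed

lemma energy_nonneg: "0 \<le> energy a \<sigma> \<phi> s"
  by (simp add: energy_eq integral_nonneg_AE energy_density_nonneg)

lemma
  assumes t: "t \<in> {t0..<T}"
  shows integrable_energy_dissipation:
      "integrable lborel (\<lambda>s. indicator {t0..t} s * integral\<^sup>L lborel (energy_density_dt s))"
    and energy_identity: "energy a \<sigma> \<phi> t - energy a \<sigma> \<phi> t0 =
      1/2 * (LBINT s. indicator {t0..t} s * integral\<^sup>L lborel (energy_density_dt s))"
proof -
  have sub: "s \<in> {t0..<T}" if "s \<in> {t0..t}" for s
    using t that by auto
  note time_deriv = integral_diff_eq_integral_time_deriv[OF _ compact_K continuous_on_energy_density_dt,
      of t energy_density]
  have hyps: "t0 \<le> t" "t < T"
    "\<And>s x. s \<in> {t0..t} \<Longrightarrow> ((\<lambda>s. energy_density s x) has_real_derivative energy_density_dt s x) (at s within {t0..t})"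
    "\<And>s x. s \<in> {t0..t} \<Longrightarrow> x \<notin> K \<Longrightarrow> energy_density s x = 0"
    "\<And>s x. s \<in> {t0..t} \<Longrightarrow> x \<notin> K \<Longrightarrow> energy_density_dt s x = 0"
    "\<And>s. s \<in> {t0..t} \<Longrightarrow> continuous_on UNIV (energy_density s)"
    using t energy_density_has_dt[OF sub] energy_density_eq_0_outside[OF sub]
      energy_density_dt_eq_0_outside[OF sub] continuous_on_energy_density[OF sub]
    by (auto intro: has_field_derivative_at_within)
  show "integrable lborel (\<lambda>s. indicator {t0..t} s * integral\<^sup>L lborel (energy_density_dt s))"
    using time_deriv(1)[OF hyps] .
  show "energy a \<sigma> \<phi> t - energy a \<sigma> \<phi> t0 =
      1/2 * (LBINT s. indicator {t0..t} s * integral\<^sup>L lborel (energy_density_dt s))"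
    using time_deriv(2)[OF hyps] by (simp add: energy_eq algebra_simps)
qed

lemma energy_bounded:
  assumes t: "t \<in> {t0..<T}" and s: "s \<in> {t0..t}"
  shows "energy a \<sigma> \<phi> s \<le> energy a \<sigma> \<phi> t0 +
    1/2 * (LBINT r. \<bar>indicator {t0..t} r * integral\<^sup>L lborel (energy_density_dt r)\<bar>)"
proof -
  have s': "s \<in> {t0..<T}"
    using s t by auto
  have "(LBINT r. indicator {t0..s} r * integral\<^sup>L lborel (energy_density_dt r))
      \<le> (LBINT r. \<bar>indicator {t0..t} r * integral\<^sup>L lborel (energy_density_dt r)\<bar>)"
    using integrable_energy_dissipation[OF s'] integrable_energy_dissipation[OF t] s
    by (intro integral_mono) (auto simp: indicator_def)
  then show ?thesis
    using energy_identity[OF s'] by simp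
qed

lemma half_integral_energy_density_dt_le:
  assumes r: "r \<in> {t0..<T}" and bound: "sqrt (energy a \<sigma> \<phi> r) \<le> m"
  shows "1/2 * integral\<^sup>L lborel (energy_density_dt r) \<le> sqrt 2 * m * (a r * L2_sigma \<sigma> (box_g a \<sigma> \<phi> r))"
proof -
  have "sqrt (2 * energy a \<sigma> \<phi> r) \<le> sqrt 2 * m"
    using bound by (simp add: real_sqrt_mult)
  then have "sqrt (2 * energy a \<sigma> \<phi> r) * L2_sigma \<sigma> (box_g a \<sigma> \<phi> r)
      \<le> sqrt 2 * m * L2_sigma \<sigma> (box_g a \<sigma> \<phi> r)"
    using L2_sigma_nonneg[OF sigma_riem] by (rule mult_right_mono)
  then have "2 * a r * (sqrt (2 * energy a \<sigma> \<phi> r) * L2_sigma \<sigma> (box_g a \<sigma> \<phi> r))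
      \<le> 2 * a r * (sqrt 2 * m * L2_sigma \<sigma> (box_g a \<sigma> \<phi> r))"
    using a_pos[of r] r by (intro mult_left_mono) auto
  then show ?thesis
    using integral_energy_density_dt_le[OF r] by (simp add: algebra_simps)
qed

text \<open>Dividing by sqrt 2 * m (hence m > 0) before passing to the nonnegative integral
  avoids multiplying extended reals.\<close>
lemma energy_increment_le:
  assumes t: "t \<in> {t0..<T}" and s: "s \<in> {t0..t}" and "0 < m" and "0 \<le> G"
    and bound: "\<And>r. r \<in> {t0..t} \<Longrightarrow> sqrt (energy a \<sigma> \<phi> r) \<le> m"
    and G: "(\<integral>\<^sup>+ r\<in>{t0..<T}. ennreal (a r * L2_sigma \<sigma> (box_g a \<sigma> \<phi> r)) \<partial>lborel) = ennreal G"
  shows "energy a \<sigma> \<phi> s \<le> energy a \<sigma> \<phi> t0 + sqrt 2 * G * m"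
proof -
  define c where "c = sqrt 2 * m"
  have "c > 0"
    using \<open>0 < m\<close> by (simp add: c_def)
  have s': "s \<in> {t0..<T}"
    using s t by auto
  have aL: "0 \<le> a r * L2_sigma \<sigma> (box_g a \<sigma> \<phi> r)" if "t0 \<le> r" for r
    using a_pos[OF that] L2_sigma_nonneg[OF sigma_riem] by simp
  have "ennreal (LBINT r. 1 / c * (1/2 * (indicator {t0..s} r * integral\<^sup>L lborel (energy_density_dt r))))
      \<le> (\<integral>\<^sup>+ r. ennreal (a r * L2_sigma \<sigma> (box_g a \<sigma> \<phi> r) * indicator {t0..<T} r) \<partial>lborel)"
  proof (rule ennreal_integral_le_nn_integral)
    show "integrable lborel (\<lambda>r. 1 / c * (1/2 * (indicator {t0..s} r * integral\<^sup>L lborel (energy_density_dt r))))"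
      using integrable_energy_dissipation[OF s'] by simp
    fix r
    show "1 / c * (1/2 * (indicator {t0..s} r * integral\<^sup>L lborel (energy_density_dt r)))
      \<le> a r * L2_sigma \<sigma> (box_g a \<sigma> \<phi> r) * indicator {t0..<T} r"
    proof (cases "r \<in> {t0..s}")
      case True
      then have r: "r \<in> {t0..<T}" "r \<in> {t0..t}"
        using s t by auto
      then have "1/2 * integral\<^sup>L lborel (energy_density_dt r) \<le> c * (a r * L2_sigma \<sigma> (box_g a \<sigma> \<phi> r))"
        unfolding c_def using bound by (intro half_integral_energy_density_dt_le) auto
      then show ?thesis
        using True r \<open>c > 0\<close> by (simp add: field_simps)
    qed (use aL in \<open>auto simp: indicator_def\<close>)
  qed
  also have "\<dots> = ennreal G"
    unfolding G[symmetric] by (intro nn_integral_cong) (simp add: indicator_def)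
  finally have "1 / c * (1/2 * (LBINT r. indicator {t0..s} r * integral\<^sup>L lborel (energy_density_dt r))) \<le> G"
    using \<open>0 \<le> G\<close> by simp
  then show ?thesis
    using energy_identity[OF s'] \<open>c > 0\<close> by (simp add: c_def field_simps)
qed

lemma sqrt_energy_le:
  assumes t: "t \<in> {t0..<T}" and "0 \<le> G"
    and G: "(\<integral>\<^sup>+ r\<in>{t0..<T}. ennreal (a r * L2_sigma \<sigma> (box_g a \<sigma> \<phi> r)) \<partial>lborel) = ennreal G"
  shows "sqrt (energy a \<sigma> \<phi> t) \<le> sqrt (energy a \<sigma> \<phi> t0) + sqrt 2 * G"
proof (rule sqrt_le_if_self_bounded[where S="{t0..t}" and E="energy a \<sigma> \<phi>" and c="sqrt 2 * G"])
  show "t0 \<in> {t0..t}" "t \<in> {t0..t}" "0 \<le> sqrt 2 * G"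
    using t \<open>0 \<le> G\<close> by auto
  show "0 \<le> energy a \<sigma> \<phi> r" for r
    by (rule energy_nonneg)
  show "energy a \<sigma> \<phi> r \<le> energy a \<sigma> \<phi> t0 +
      1/2 * (LBINT r. \<bar>indicator {t0..t} r * integral\<^sup>L lborel (energy_density_dt r)\<bar>)"
    if "r \<in> {t0..t}" for r
    using energy_bounded[OF t that] .
  show "energy a \<sigma> \<phi> r \<le> energy a \<sigma> \<phi> t0 + sqrt 2 * G * m"
    if "0 < m" "\<And>q. q \<in> {t0..t} \<Longrightarrow> sqrt (energy a \<sigma> \<phi> q) \<le> m" "r \<in> {t0..t}" for m r
    using energy_increment_le[OF t that(3) that(1) \<open>0 \<le> G\<close> that(2) G] .
qed

lemma energy_estimate:
  assumes t: "t \<in> {t0..<T}"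
  shows "ennreal (sqrt (energy a \<sigma> \<phi> t))
    \<le> ennreal 2 * (ennreal (sqrt (energy a \<sigma> \<phi> t0))
      + (\<integral>\<^sup>+ s\<in>{t0..<T}. ennreal (a s * L2_sigma \<sigma> (box_g a \<sigma> \<phi> s)) \<partial>lborel))"
proof (cases "\<integral>\<^sup>+ s\<in>{t0..<T}. ennreal (a s * L2_sigma \<sigma> (box_g a \<sigma> \<phi> s)) \<partial>lborel" rule: ennreal_cases)
  case (real G)
  have "sqrt (energy a \<sigma> \<phi> t) \<le> sqrt (energy a \<sigma> \<phi> t0) + sqrt 2 * G"
    using sqrt_energy_le[OF t real] .
  also have "\<dots> \<le> 2 * (sqrt (energy a \<sigma> \<phi> t0) + G)"
  proof -
    have "sqrt 2 * G \<le> 2 * G"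
      using real(1) sqrt2_less_2 by (intro mult_right_mono) auto
    then show ?thesis
      unfolding distrib_left using real_sqrt_ge_zero[OF energy_nonneg[of t0]] by linarith
  qed
  finally have "ennreal (sqrt (energy a \<sigma> \<phi> t)) \<le> ennreal (2 * (sqrt (energy a \<sigma> \<phi> t0) + G))"
    by (rule ennreal_leI)
  also have "\<dots> = ennreal 2 * (ennreal (sqrt (energy a \<sigma> \<phi> t0)) + ennreal G)"
    using real(1) energy_nonneg[of t0] by (simp add: ennreal_mult ennreal_plus)
  finally show ?thesis
    using real(2) by simp
qed (simp add: ennreal_mult_top)

end

theorem theorem3p2:
  fixes a :: "real \<Rightarrow> real" and \<sigma> :: "real^'n \<Rightarrow> real^'n^'n" and t0 :: real
  assumes t0_pos: "t0 > 0"
    and a_smooth: "smooth_on {0<..} a"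
    and a_pos: "\<And>t. t \<ge> t0 \<Longrightarrow> a t > 0"
    and a_incr: "\<And>t. t \<ge> t0 \<Longrightarrow> deriv a t > 0"
    and a_int: "(\<integral>\<^sup>+ s\<in>{t0..}. ennreal (1 / a s) \<partial>lborel) < \<infinity>"
    and sigma_riem: "riemannian_metric \<sigma>"
  shows "\<exists>C1>0. \<forall>T > t0. \<forall>\<phi> :: real \<Rightarrow> real^'n \<Rightarrow> real.
           (\<exists>U. open U \<and> {t0..<T} \<times> UNIV \<subseteq> U \<and> smooth_on U (\<lambda>(t, x). \<phi> t x)) \<and>
           (\<exists>K. compact K \<and> (\<forall>t\<in>{t0..<T}. \<forall>x. x \<notin> K \<longrightarrow> \<phi> t x = 0)) \<longrightarrow>
           (\<forall>t\<in>{t0..<T}.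
              ennreal (sqrt (energy a \<sigma> \<phi> t))
                \<le> ennreal C1 * (ennreal (sqrt (energy a \<sigma> \<phi> t0))
                    + (\<integral>\<^sup>+ s\<in>{t0..<T}. ennreal (a s * L2_sigma \<sigma> (box_g a \<sigma> \<phi> s)) \<partial>lborel)))"
proof (intro exI[of _ "2::real"] conjI allI impI ballI)
  fix T :: real and \<phi> :: "real \<Rightarrow> real^'n \<Rightarrow> real" and t :: real
  assume "(\<exists>U. open U \<and> {t0..<T} \<times> UNIV \<subseteq> U \<and> smooth_on U (\<lambda>(t, x). \<phi> t x)) \<and>
           (\<exists>K. compact K \<and> (\<forall>t\<in>{t0..<T}. \<forall>x. x \<notin> K \<longrightarrow> \<phi> t x = 0))"
    and t: "t \<in> {t0..<T}"
  then obtain U K where "open U" "{t0..<T} \<times> UNIV \<subseteq> U" "smooth_on U (\<lambda>(t, x). \<phi> t x)"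
    and "compact K" "\<forall>t\<in>{t0..<T}. \<forall>x. x \<notin> K \<longrightarrow> \<phi> t x = 0"
    by blast
  then interpret flrw_wave a \<sigma> t0 T \<phi> U K
    using t0_pos a_smooth a_pos a_incr sigma_riem by unfold_locales auto
  show "ennreal (sqrt (energy a \<sigma> \<phi> t))
      \<le> ennreal 2 * (ennreal (sqrt (energy a \<sigma> \<phi> t0))
        + (\<integral>\<^sup>+ s\<in>{t0..<T}. ennreal (a s * L2_sigma \<sigma> (box_g a \<sigma> \<phi> s)) \<partial>lborel))"
    by (rule energy_estimate[OF t])
qed simp

end
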